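(* For every odd positive integer $n$ and every $D > 1$, there is an instance of colorful $k$-center with $8n$ points, $k=n$, and $r=b=2n$, such that every solution has radius at least $D$, yet the polytope of LP1 with unit radius for this instance is not recognized as infeasible by $\Omega(n)$ rounds of the Sum-of-Squares hierarchy: there is a constant $c>0$ (independent of $n$ and $D$) such that for every $t \le cn$ the $t$-th SoS lifted polytope $SoS^t(K)$ of the LP1 polytope $K$ is nonempty. Consequently the integrality gap of LP1 with $8n$ points persists (is unbounded) up to $\Omega(n)$ rounds of Sum-of-Squares.
   Context: An instance of colorful $k$-center consists of a finite set $P$ of points with a metric $d$, a partition $P=R\cup B$ into red and blue points, and integers $k,r,b\ge0$; with $\mathcal{B}(j,\rho)=\{p\in P:d(j,p)\le\rho\}$, a solution of radius $\rho$ is $C\subseteq P$, $|C|\le k$, with $\bigcup_{c\in C}\mathcal{B}(c,\rho)$ containing at least $r$ red and $b$ blue points. LP1 (unit radius, $\mathcal{B}(j)=\mathcal{B}(j,1)$) is the polytope $K$ of vectors $(x,z)\in[0,1]^{P}\times[0,1]^P$ with $\sum_{i\in\mathcal{B}(j)}x_i\ge z_j$ for all $j\in P$, $\sum_{i\in P}x_i\le k$, $\sum_{j\in R}z_j\ge r$, $\sum_{j\in B}z_j\ge b$. Sum-of-Squares: let $V$ be the variable set, $K=\{v\in[0,1]^V: g_\ell(v)\ge0,\ \ell=1,\dots,m\}$ with linear $g_\ell$. $\mathcal{P}_t(V)$ denotes subsets of $V$ of size at most $t$. For $y\in\mathbb{R}^{\mathcal{P}(V)}$ and $g(v)=\sum_{I\subseteq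 V} a_I\prod_{i\in I}v_i$, $(g*y)_I=\sum_{J\subseteq V}a_J y_{I\cup J}$. For a collection $\mathcal{T}$ of subsets, $M_{\mathcal{T}}(y)$ is the matrix indexed by $\mathcal{T}$ with $(M_{\mathcal{T}}(y))_{I,J}=y_{I\cup J}$. The $t$-th SoS lifted polytope $SoS^t(K)$ is the set of $y\in[0,1]^{\mathcal{P}_{2t}(V)}$ with $y_\emptyset=1$, $M_{\mathcal{P}_t(V)}(y)\succeq0$, and $M_{\mathcal{P}_{t-1}(V)}(g_\ell*y)\succeq0$ for all $\ell$. *)

theory Defs
  imports Complex_Main
begin

definition metric_on :: "nat set \<Rightarrow> (nat \<Rightarrow> nat \<Rightarrow> real) \<Rightarrow> bool" where
  "metric_on P d \<longleftrightarrow>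
     (\<forall>x\<in>P. \<forall>y\<in>P. 0 \<le> d x y \<and> d x y = d y x \<and> (d x y = 0 \<longleftrightarrow> x = y)) \<and>
     (\<forall>x\<in>P. \<forall>y\<in>P. \<forall>z\<in>P. d x z \<le> d x y + d y z)"

definition cball_pts :: "nat set \<Rightarrow> (nat \<Rightarrow> nat \<Rightarrow> real) \<Rightarrow> nat \<Rightarrow> real \<Rightarrow> nat set" where
  "cball_pts P d j \<rho> = {p \<in> P. d j p \<le> \<rho>}"

definition colorful_solution ::
  "nat set \<Rightarrow> (nat \<Rightarrow> nat \<Rightarrow> real) \<Rightarrow> nat set \<Rightarrow> nat \<Rightarrow> nat \<Rightarrow> nat \<Rightarrow> real \<Rightarrow> nat set \<Rightarrow> bool" where
  "colorful_solution P d R k r b \<rho> C \<longleftrightarrow>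
     C \<subseteq> P \<and> card C \<le> k \<and>
     card ((\<Union>c\<in>C. cball_pts P d c \<rho>) \<inter> R) \<ge> r \<and>
     card ((\<Union>c\<in>C. cball_pts P d c \<rho>) \<inter> (P - R)) \<ge> b"

text \<open>LP variables: Inl i is x_i, Inr j is z_j.\<close>
type_synonym var = "nat + nat"

definition lp_vars :: "nat set \<Rightarrow> var set" where
  "lp_vars P = Inl ` P \<union> Inr ` P"

text \<open>A linear (affine) function g(v) = a0 + sum_i a_i v_i, given as (a0, a).\<close>
type_synonym linform = "real \<times> (var \<Rightarrow> real)"

text \<open>The linear constraints g_l(v) >= 0 of LP1 with unit radius (box constraints are
  the [0,1] requirement in the definition of K, not part of this list).\<close>
definition lp1_constraints ::
  "nat set \<Rightarrow> (nat \<Rightarrow> nat \<Rightarrow> real) \<Rightarrow> nat set \<Rightarrow> nat \<Rightarrow> nat \<Rightarrow> nat \<Rightarrow> linform set" where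
  "lp1_constraints P d R k r b =
     {(0, \<lambda>v. case v of Inl i \<Rightarrow> (if i \<in> cball_pts P d j 1 then 1 else 0)
                      | Inr j' \<Rightarrow> (if j' = j then -1 else 0)) | j. j \<in> P}
   \<union> {(real k, \<lambda>v. case v of Inl i \<Rightarrow> (if i \<in> P then -1 else 0) | Inr _ \<Rightarrow> 0)}
   \<union> {(- real r, \<lambda>v. case v of Inl _ \<Rightarrow> 0 | Inr j \<Rightarrow> (if j \<in> R then 1 else 0))}
   \<union> {(- real b, \<lambda>v. case v of Inl _ \<Rightarrow> 0 | Inr j \<Rightarrow> (if j \<in> P - R then 1 else 0))}"

definition subsets_upto :: "var set \<Rightarrow> nat \<Rightarrow> var set set" where
  "subsets_upto V t = {I. I \<subseteq> V \<and> card I \<le> t}"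

definition lin_star :: "var set \<Rightarrow> linform \<Rightarrow> (var set \<Rightarrow> real) \<Rightarrow> var set \<Rightarrow> real" where
  "lin_star V g y I = fst g * y I + (\<Sum>i\<in>V. snd g i * y (insert i I))"

definition psd_on :: "var set set \<Rightarrow> (var set \<Rightarrow> var set \<Rightarrow> real) \<Rightarrow> bool" where
  "psd_on T M \<longleftrightarrow> (\<forall>I\<in>T. \<forall>J\<in>T. M I J = M J I) \<and>
     (\<forall>v :: var set \<Rightarrow> real. 0 \<le> (\<Sum>I\<in>T. \<Sum>J\<in>T. v I * M I J * v J))"

text \<open>y belongs to SoS^t(K); only the entries of y indexed by P_{2t}(V) matter.\<close>
definition in_sos_lift :: "var set \<Rightarrow> linform set \<Rightarrow> nat \<Rightarrow> (var set \<Rightarrow> real) \<Rightarrow> bool" where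
  "in_sos_lift V G t y \<longleftrightarrow>
     y {} = 1 \<and>
     (\<forall>I \<in> subsets_upto V (2 * t). 0 \<le> y I \<and> y I \<le> 1) \<and>
     psd_on (subsets_upto V t) (\<lambda>I J. y (I \<union> J)) \<and>
     (\<forall>g\<in>G. psd_on (subsets_upto V (t - 1)) (\<lambda>I J. lin_star V g y (I \<union> J)))"

end

theory Submission
  imports Defs "HOL-Combinatorics.Transposition"
begin

text \<open>
  Integrality gap: the 8n points form 2n clusters of four points at mutual distance 1, different
  clusters being at distance D. A ball of radius less than D stays inside its cluster, so covering
  2n red and 2n blue points needs at least n/2 red and n/2 blue centres, i.e. (n + 1)/2 of each
  since n is odd, which exceeds k = n.

  Sum-of-Squares: a set X of red clusters determines the 0/1 point opening the red clusters in X
  and the blue clusters paired with the others; at this point every constraint of LP1 is a multiple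
  of |X| - n/2. The lifted vector is the image of Grigoriev's pseudo-expectation for the knapsack
  constraint |X| = n/2 on n elements, the polynomial continuation in K of the expectation over
  uniformly random K-subsets. It annihilates (|X| - K) times polynomials of degree below n, which
  gives the localizing conditions, and it is nonnegative on squares of polynomials of degree t as
  long as 2t is at most n. The latter follows by induction on t: the Laplacian of the transposition
  graph on subsets is self-adjoint for the pseudo-expectation and, modulo the constraint, triangular
  in the degree with positive eigenvalues; its quadratic form is a sum of squares of differences
  G (X + i) - G (X + k), polynomials of degree t - 1 on two fewer elements.
\<close>

section \<open>Grigoriev's pseudo-expectation\<close>

lemma gbinomial_ratio_Suc_Suc:
  "(a gchoose Suc k) / real (Suc n choose Suc k) = a / real (Suc n) * ((a - 1) gchoose k) / real (n choose k)"
proof (cases "k \<le> n")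
  case True
  have top: "a gchoose Suc k = a / real (Suc k) * ((a - 1) gchoose k)"
    using gbinomial_absorption'[of "Suc k" a] by simp
  have "real (Suc k) * real (Suc n choose Suc k) = real (Suc n) * real (n choose k)"
    by (metis Suc_times_binomial of_nat_mult)
  then have bot: "real (Suc n choose Suc k) = real (Suc n) / real (Suc k) * real (n choose k)"
    by (metis mult.commute nonzero_eq_divide_eq times_divide_eq_left of_nat_eq_0_iff Zero_not_Suc)
  have "(n choose k) > 0" using True by simp
  then show ?thesis
    unfolding top bot by (simp add: field_simps del: of_nat_Suc)
qed (simp add: binomial_eq_0 del: binomial_Suc_Suc)

lemma gbinomial_ratio_Suc:
  assumes "k < n"
  shows "(real n - real k) * ((a gchoose Suc k) / real (n choose Suc k))
       = (a - real k) * ((a gchoose k) / real (n choose k))"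
proof -
  have absorb: "(b - real k) * (b gchoose k) = real (Suc k) * (b gchoose Suc k)" for b :: real
    using gbinomial_mult_1[of b k] by (simp add: algebra_simps)
  have bot: "real (n choose Suc k) = (real n - real k) * real (n choose k) / real (Suc k)"
    using absorb[of "real n"] by (simp add: binomial_gbinomial field_simps del: of_nat_Suc)
  have "real n - real k \<noteq> 0" "(n choose k) \<noteq> 0" using assms by auto
  then have "(real n - real k) * ((a gchoose Suc k) / real (n choose Suc k))
      = real (Suc k) * (a gchoose Suc k) / real (n choose k)"
    unfolding bot by (simp add: field_simps del: of_nat_Suc)
  also have "\<dots> = (a - real k) * ((a gchoose k) / real (n choose k))"
    by (simp only: absorb times_divide_eq_right)
  finally show ?thesis .
qed

text \<open>
  For integral K with 0 <= K <= N the weight is 1/(N choose K) on sets of size K and 0 otherwise, so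
  pexp V K f is the expectation of f over a uniformly random K-subset of V; the weights
  are polynomials in K, which makes sense of a fractional K such as n/2.
\<close>

definition pexp_weight :: "nat \<Rightarrow> real \<Rightarrow> nat \<Rightarrow> real" where
  "pexp_weight N K w = (K gchoose w) * ((real N - K) gchoose (N - w)) / real (N choose w)"

definition pexp :: "'a set \<Rightarrow> real \<Rightarrow> ('a set \<Rightarrow> real) \<Rightarrow> real" where
  "pexp V K f = (\<Sum>X\<in>Pow V. pexp_weight (card V) K (card X) * f X)"

lemma pexp_weight_Suc_Suc:
  "pexp_weight (Suc M) K (Suc w) = K / real (Suc M) * pexp_weight M (K - 1) w"
proof -
  have "real (Suc M) - K = real M - (K - 1)" by simp
  then have "pexp_weight (Suc M) K (Suc w)
      = (K gchoose Suc w) / real (Suc M choose Suc w) * ((real M - (K - 1)) gchoose (M - w))"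
    unfolding pexp_weight_def diff_Suc_Suc by (metis times_divide_eq_left)
  then show ?thesis
    unfolding gbinomial_ratio_Suc_Suc pexp_weight_def by simp
qed

lemma pexp_weight_Suc:
  assumes "w \<le> M"
  shows "pexp_weight (Suc M) K w = (real (Suc M) - K) / real (Suc M) * pexp_weight M K w"
proof -
  have "Suc M - w = Suc (M - w)" using assms by simp
  then have "pexp_weight (Suc M) K w
      = (K gchoose w) * (((real (Suc M) - K) gchoose Suc (M - w)) / real (Suc M choose Suc (M - w)))"
    unfolding pexp_weight_def using binomial_symmetric[OF le_SucI[OF assms]]
    by (simp del: binomial_Suc_Suc)
  also have "\<dots> = (K gchoose w) * ((real (Suc M) - K) / real (Suc M) * ((real M - K) gchoose (M - w))
      / real (M choose w))"
    unfolding gbinomial_ratio_Suc_Suc binomial_symmetric[OF assms, symmetric] by (simp add: algebra_simps)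
  finally show ?thesis
    unfolding pexp_weight_def by simp
qed

lemma pexp_cong: "(\<And>X. X \<subseteq> V \<Longrightarrow> f X = g X) \<Longrightarrow> pexp V K f = pexp V K g"
  unfolding pexp_def by (intro sum.cong) auto

lemma pexp_add: "pexp V K (\<lambda>X. f X + g X) = pexp V K f + pexp V K g"
  unfolding pexp_def by (simp add: algebra_simps sum.distrib)

lemma pexp_diff: "pexp V K (\<lambda>X. f X - g X) = pexp V K f - pexp V K g"
  unfolding pexp_def by (simp add: algebra_simps sum_subtractf)

lemma pexp_cmult: "pexp V K (\<lambda>X. c * f X) = c * pexp V K f"
  unfolding pexp_def by (simp add: algebra_simps sum_distrib_left)

lemma pexp_sum: "pexp V K (\<lambda>X. \<Sum>a\<in>A. f a X) = (\<Sum>a\<in>A. pexp V K (f a))"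
  unfolding pexp_def by (simp add: sum_distrib_left sum.swap[of _ A])

lemma pexp_zero [simp]: "pexp V K (\<lambda>X. 0) = 0"
  unfolding pexp_def by simp

lemma pexp_remove:
  assumes "finite V" "i \<in> V"
  shows "pexp V K f = K / real (card V) * pexp (V - {i}) (K - 1) (\<lambda>X. f (insert i X))
                    + (real (card V) - K) / real (card V) * pexp (V - {i}) K f"
proof -
  define W where "W = V - {i}"
  have V: "V = insert i W" and iW: "i \<notin> W" and W: "finite W"
    using assms by (auto simp: W_def)
  have cV: "card V = Suc (card W)" using V iW W by simp
  have inj: "inj_on (insert i) (Pow W)"
    using iW by (intro inj_onI) (metis Pow_iff insert_ident subsetD)
  have "pexp V K f = (\<Sum>X\<in>Pow W. pexp_weight (card V) K (card X) * f X)
      + (\<Sum>X\<in>insert i ` Pow W. pexp_weight (card V) K (card X) * f X)"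
    unfolding pexp_def V Pow_insert using W iW by (subst sum.union_disjoint) auto
  also have "(\<Sum>X\<in>insert i ` Pow W. pexp_weight (card V) K (card X) * f X)
      = (\<Sum>X\<in>Pow W. K / real (card V) * (pexp_weight (card W) (K - 1) (card X) * f (insert i X)))"
  proof (subst sum.reindex[OF inj], intro sum.cong refl)
    fix X assume "X \<in> Pow W"
    then have "card (insert i X) = Suc (card X)" using iW W by (meson PowD card_insert_disjoint finite_subset subsetD)
    then show "((\<lambda>X. pexp_weight (card V) K (card X) * f X) \<circ> insert i) X
        = K / real (card V) * (pexp_weight (card W) (K - 1) (card X) * f (insert i X))"
      by (simp add: cV pexp_weight_Suc_Suc)
  qed
  also have "(\<Sum>X\<in>Pow W. pexp_weight (card V) K (card X) * f X)
      = (\<Sum>X\<in>Pow W. (real (card V) - K) / real (card V) * (pexp_weight (card W) K (card X) * f X))"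
  proof (intro sum.cong refl)
    fix X assume "X \<in> Pow W"
    then have "card X \<le> card W" using W by (simp add: card_mono)
    then show "pexp_weight (card V) K (card X) * f X
        = (real (card V) - K) / real (card V) * (pexp_weight (card W) K (card X) * f X)"
      unfolding cV by (simp add: pexp_weight_Suc)
  qed
  finally show ?thesis
    unfolding pexp_def W_def[symmetric] by (simp add: sum_distrib_left add.commute)
qed

lemma pexp_remove_mem:
  assumes "finite V" "i \<in> V" "\<And>X. X \<subseteq> V - {i} \<Longrightarrow> f X = 0"
  shows "pexp V K f = K / real (card V) * pexp (V - {i}) (K - 1) (\<lambda>X. f (insert i X))"
  using pexp_remove[OF assms(1,2), of K f] pexp_cong[of "V - {i}" f "\<lambda>_. 0"] assms(3) by simp

lemma pexp_remove_nonmem: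
  assumes "finite V" "i \<in> V" "\<And>X. X \<subseteq> V - {i} \<Longrightarrow> f (insert i X) = 0"
  shows "pexp V K f = (real (card V) - K) / real (card V) * pexp (V - {i}) K f"
  using pexp_remove[OF assms(1,2), of K f] pexp_cong[of "V - {i}" "\<lambda>X. f (insert i X)" "\<lambda>_. 0"] assms(3)
  by simp

lemma pexp_const: "finite V \<Longrightarrow> pexp V K (\<lambda>X. c) = c"
proof (induction "card V" arbitrary: V K)
  case 0
  then show ?case by (simp add: pexp_def pexp_weight_def)
next
  case (Suc M)
  then obtain i where i: "i \<in> V" by (metis card_eq_SucD insertI1)
  have "card (V - {i}) = M" using Suc i by simp
  then have "pexp V K (\<lambda>X. c) = K / real (card V) * c + (real (card V) - K) / real (card V) * c"
    using pexp_remove[OF Suc(3) i, of K] Suc(1)[of "V - {i}"] Suc(3) by simp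
  also have "\<dots> = c"
    using Suc(2) by (simp add: add_divide_distrib[symmetric] distrib_right[symmetric])
  finally show ?case .
qed

abbreviation transpose_set :: "'a \<Rightarrow> 'a \<Rightarrow> 'a set \<Rightarrow> 'a set" where
  "transpose_set i k X \<equiv> Transposition.transpose i k ` X"

lemma transpose_set_involutory [simp]: "transpose_set i k (transpose_set i k X) = X"
  by (simp add: image_image)

lemma card_transpose_set [simp]: "card (transpose_set i k X) = card X"
  by (simp add: card_image)

lemma transpose_set_subset: "i \<in> V \<Longrightarrow> k \<in> V \<Longrightarrow> X \<subseteq> V \<Longrightarrow> transpose_set i k X \<subseteq> V"
  by (auto simp: Transposition.transpose_def)

lemma pexp_transpose:
  assumes "i \<in> V" "k \<in> V"
  shows "pexp V K (\<lambda>X. f (transpose_set i k X)) = pexp V K f"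
  unfolding pexp_def
  by (rule sum.reindex_bij_witness[where i = "transpose_set i k" and j = "transpose_set i k"])
     (use assms in \<open>simp_all add: transpose_set_subset\<close>)

definition monomial :: "'a set \<Rightarrow> 'a set \<Rightarrow> real" where
  "monomial S X = of_bool (S \<subseteq> X)"

lemma monomial_transpose: "monomial S (transpose_set i k X) = monomial (transpose_set i k S) X"
  unfolding monomial_def by (auto simp: in_transpose_image_iff)

lemma monomial_mult: "monomial S X * monomial T X = monomial (S \<union> T) X"
  unfolding monomial_def by auto

text \<open>
  Functions on subsets of V stand for multilinear polynomials in the indicator variables:
  monomial S is the product of the variables in S, and low_degree V s F says that F agrees on
  subsets of V with a polynomial of degree at most s.
\<close>

inductive low_degree :: "'a set \<Rightarrow> nat \<Rightarrow> ('a set \<Rightarrow> real) \<Rightarrow> bool" for V s where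
  monomial: "S \<subseteq> V \<Longrightarrow> card S \<le> s \<Longrightarrow> low_degree V s (monomial S)"
| add: "low_degree V s F \<Longrightarrow> low_degree V s G \<Longrightarrow> low_degree V s (\<lambda>X. F X + G X)"
| cmult: "low_degree V s F \<Longrightarrow> low_degree V s (\<lambda>X. c * F X)"
| cong: "low_degree V s F \<Longrightarrow> (\<And>X. X \<subseteq> V \<Longrightarrow> G X = F X) \<Longrightarrow> low_degree V s G"

lemma low_degree_const: "low_degree V s (\<lambda>X. c)"
proof -
  have "low_degree V s (\<lambda>X. c * monomial {} X)" by (intro low_degree.cmult low_degree.monomial) auto
  then show ?thesis by (rule low_degree.cong) (simp add: monomial_def)
qed

lemma low_degree_diff: "low_degree V s F \<Longrightarrow> low_degree V s G \<Longrightarrow> low_degree V s (\<lambda>X. F X - G X)"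
  using low_degree.add[OF _ low_degree.cmult[of V s G "-1"]] by (rule low_degree.cong) auto

lemma low_degree_sum:
  "finite A \<Longrightarrow> (\<And>a. a \<in> A \<Longrightarrow> low_degree V s (F a)) \<Longrightarrow> low_degree V s (\<lambda>X. \<Sum>a\<in>A. F a X)"
proof (induction A rule: finite_induct)
  case empty
  then show ?case using low_degree_const by simp
next
  case (insert a A)
  then have "low_degree V s (\<lambda>X. F a X + (\<Sum>a\<in>A. F a X))" by (intro low_degree.add) auto
  then show ?case by (rule low_degree.cong) (use insert in simp)
qed

lemma low_degree_mono: "low_degree V s F \<Longrightarrow> s \<le> s' \<Longrightarrow> low_degree V s' F"
  by (induction rule: low_degree.induct) (auto intro: low_degree.intros)

lemma low_degree_mult_monomial:
  assumes "S \<subseteq> V" "card S \<le> a" "low_degree V b G"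
  shows "low_degree V (a + b) (\<lambda>X. monomial S X * G X)"
  using assms(3)
proof (induction rule: low_degree.induct)
  case (monomial T)
  have "card (S \<union> T) \<le> a + b" using card_Un_le[of S T] assms(2) monomial(2) by linarith
  then have "low_degree V (a + b) (monomial (S \<union> T))"
    using assms(1) monomial(1) by (intro low_degree.monomial) auto
  then show ?case by (rule low_degree.cong) (simp add: monomial_mult)
next
  case (add F G)
  then have "low_degree V (a + b) (\<lambda>X. monomial S X * F X + monomial S X * G X)"
    by (intro low_degree.add)
  then show ?case by (rule low_degree.cong) (simp add: algebra_simps)
next
  case (cmult F c)
  then have "low_degree V (a + b) (\<lambda>X. c * (monomial S X * F X))" by (intro low_degree.cmult)
  then show ?case by (rule low_degree.cong) (simp add: algebra_simps)
next
  case (cong F G)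
  then show ?case by (intro low_degree.cong[OF cong(3)]) auto
qed

lemma low_degree_mult:
  "low_degree V a F \<Longrightarrow> low_degree V b G \<Longrightarrow> low_degree V (a + b) (\<lambda>X. F X * G X)"
proof (induction rule: low_degree.induct)
  case (monomial S)
  then show ?case by (rule low_degree_mult_monomial)
next
  case (add F1 F2)
  then have "low_degree V (a + b) (\<lambda>X. F1 X * G X + F2 X * G X)" by (intro low_degree.add)
  then show ?case by (rule low_degree.cong) (simp add: algebra_simps)
next
  case (cmult F c)
  then have "low_degree V (a + b) (\<lambda>X. c * (F X * G X))" by (intro low_degree.cmult)
  then show ?case by (rule low_degree.cong) (simp add: algebra_simps)
next
  case (cong F F')
  then show ?case by (intro low_degree.cong[OF cong(3)]) auto
qed

lemma pexp_monomial:
  assumes "finite V" "T \<subseteq> V"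
  shows "pexp V K (monomial T) = (K gchoose card T) / real (card V choose card T)"
  using assms
proof (induction "card T" arbitrary: V K T)
  case 0
  then have "T = {}" using finite_subset by (metis card_0_eq)
  then have "monomial T = (\<lambda>X. 1)" by (simp add: monomial_def fun_eq_iff)
  then show ?case using pexp_const[OF 0(2)] 0(1) by simp
next
  case (Suc s)
  then obtain i where i: "i \<in> T" by (metis card_eq_SucD insertI1)
  have iV: "i \<in> V" using i Suc(4) by auto
  obtain M where M: "card V = Suc M" using iV Suc(3) by (metis card_Suc_Diff1)
  have T: "card (T - {i}) = s" "T - {i} \<subseteq> V - {i}"
    using Suc(2,3,4) i by (auto intro: finite_subset)
  have "pexp V K (monomial T) = K / real (card V) * pexp (V - {i}) (K - 1) (\<lambda>X. monomial T (insert i X))"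
    by (rule pexp_remove_mem[OF Suc(3) iV]) (use i in \<open>auto simp: monomial_def\<close>)
  also have "(\<lambda>X. monomial T (insert i X)) = monomial (T - {i})"
    using i by (auto simp: monomial_def fun_eq_iff)
  also have "K / real (card V) * pexp (V - {i}) (K - 1) (monomial (T - {i}))
      = K / real (Suc M) * ((K - 1) gchoose s) / real (M choose s)"
    using Suc(1)[OF T(1)[symmetric] _ T(2)] Suc(3) M iV T(1) by simp
  also have "\<dots> = (K gchoose card T) / real (card V choose card T)"
    unfolding M Suc(2)[symmetric] gbinomial_ratio_Suc_Suc ..
  finally show ?case .
qed

lemma card_eq_sum_monomial: "finite V \<Longrightarrow> X \<subseteq> V \<Longrightarrow> real (card X) = (\<Sum>j\<in>V. monomial {j} X)"
  by (simp add: monomial_def of_bool_def sum.If_cases Int_absorb1)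

lemma pexp_card_constraint_monomial:
  assumes "finite V" "T \<subseteq> V" "card T < card V"
  shows "pexp V K (\<lambda>X. (real (card X) - K) * monomial T X) = 0"
proof -
  define s where "s = card T"
  define N where "N = card V"
  define m where "m = (\<lambda>s. (K gchoose s) / real (N choose s))"
  have T: "finite T" using assms finite_subset by auto
  have "pexp V K (\<lambda>X. (real (card X) - K) * monomial T X)
      = pexp V K (\<lambda>X. (\<Sum>j\<in>V. monomial (insert j T) X) - K * monomial T X)"
  proof (intro pexp_cong)
    fix X assume "X \<subseteq> V"
    then show "(real (card X) - K) * monomial T X = (\<Sum>j\<in>V. monomial (insert j T) X) - K * monomial T X"
      using monomial_mult[of "{_}" X T]
      by (simp add: card_eq_sum_monomial[OF assms(1)] left_diff_distrib sum_distrib_right)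
  qed
  also have "\<dots> = (\<Sum>j\<in>V. m (card (insert j T))) - K * m s"
    unfolding pexp_diff pexp_sum pexp_cmult m_def N_def s_def
    using assms by (simp add: pexp_monomial)
  also have "(\<Sum>j\<in>V. m (card (insert j T))) = (\<Sum>j\<in>T. m s) + (\<Sum>j\<in>V - T. m (Suc s))"
    using sum.subset_diff[OF assms(2,1), of "\<lambda>j. m (card (insert j T))"] T
    by (simp add: s_def insert_absorb add.commute)
  also have "\<dots> = real s * m s + (real N - real s) * m (Suc s)"
    using assms T by (simp add: s_def N_def card_Diff_subset card_mono)
  also have "(real N - real s) * m (Suc s) = (K - real s) * m s"
    unfolding m_def using assms by (intro gbinomial_ratio_Suc) (simp add: s_def N_def)
  finally show ?thesis by (simp add: algebra_simps)
qed

lemma pexp_card_constraint: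
  assumes "finite V" "low_degree V s H" "s < card V"
  shows "pexp V K (\<lambda>X. (real (card X) - K) * H X) = 0"
  using assms(2,3)
proof (induction rule: low_degree.induct)
  case (monomial S)
  then show ?case using pexp_card_constraint_monomial[OF assms(1)] by auto
next
  case (add F G)
  then show ?case by (simp add: distrib_left pexp_add)
next
  case (cmult F c)
  then show ?case using pexp_cmult[of V K c "\<lambda>X. (real (card X) - K) * F X"] by (simp add: algebra_simps)
next
  case (cong F G)
  then show ?case by (metis (no_types, lifting) pexp_cong)
qed

definition face_indicator :: "'a set \<Rightarrow> 'a set \<Rightarrow> 'a set \<Rightarrow> real" where
  "face_indicator A B X = of_bool (A \<subseteq> X \<and> B \<inter> X = {})"

lemma pexp_face_indicator_remove_mem:
  assumes "finite V" "i \<in> A" "A \<subseteq> V" "i \<notin> B"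
  shows "pexp V K (face_indicator A B) = K / real (card V) * pexp (V - {i}) (K - 1) (face_indicator (A - {i}) B)"
proof -
  have "pexp V K (face_indicator A B)
      = K / real (card V) * pexp (V - {i}) (K - 1) (\<lambda>X. face_indicator A B (insert i X))"
    by (rule pexp_remove_mem) (use assms in \<open>auto simp: face_indicator_def\<close>)
  also have "(\<lambda>X. face_indicator A B (insert i X)) = face_indicator (A - {i}) B"
    using assms(4) by (auto simp: face_indicator_def fun_eq_iff)
  finally show ?thesis .
qed

lemma pexp_face_indicator_remove_nonmem:
  assumes "finite V" "i \<in> B" "B \<subseteq> V"
  shows "pexp V K (face_indicator A B) = (real (card V) - K) / real (card V) * pexp (V - {i}) K (face_indicator A (B - {i}))"
proof -
  have "pexp V K (face_indicator A B) = (real (card V) - K) / real (card V) * pexp (V - {i}) K (face_indicator A B)"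
    by (rule pexp_remove_nonmem) (use assms in \<open>auto simp: face_indicator_def\<close>)
  also have "pexp (V - {i}) K (face_indicator A B) = pexp (V - {i}) K (face_indicator A (B - {i}))"
    by (rule pexp_cong) (auto simp: face_indicator_def)
  finally show ?thesis .
qed

lemma pexp_face_indicator_bounds:
  assumes "finite V" "A \<subseteq> V" "B \<subseteq> V" "A \<inter> B = {}" "real (card A) \<le> K" "real (card B) \<le> real (card V) - K"
  shows "pexp V K (face_indicator A B) \<in> {0..1}"
  using assms
proof (induction "card A + card B" arbitrary: V K A B)
  case 0
  then have "finite A" "finite B" using finite_subset by blast+
  then have "face_indicator A B = (\<lambda>X. 1)" using 0(1) by (simp add: face_indicator_def fun_eq_iff)
  then show ?case using pexp_const[OF 0(2)] by simp
next
  case (Suc m)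
  have finite: "finite A" "finite B" using Suc.prems(1-3) finite_subset by blast+
  have unit: "a * b \<in> {0..1}" if "a \<in> {0..1}" "b \<in> {0..1}" for a b :: real
    using that by (auto intro: mult_le_one)
  have pos: "card S \<ge> 1" if "finite S" "i \<in> S" for S and i :: 'a
    using that by (metis One_nat_def Suc_leI card_gt_0_iff empty_iff)
  from Suc.hyps(2) obtain i where "i \<in> A \<or> i \<in> B"
    by (metis add_is_0 card.empty ex_in_conv nat.simps(3))
  then show ?case
  proof
    assume i: "i \<in> A"
    then have iV: "i \<in> V" and "i \<notin> B" using Suc.prems(2,4) by auto
    have "pexp (V - {i}) (K - 1) (face_indicator (A - {i}) B) \<in> {0..1}"
      using Suc.hyps(2) Suc.prems finite i iV \<open>i \<notin> B\<close> pos[of A i] pos[of V i]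
      by (intro Suc.hyps(1)) auto
    moreover have "K / real (card V) \<in> {0..1}"
      using Suc.prems(5,6) pos[OF finite(1) i] by (auto simp: divide_le_eq_1)
    ultimately show ?case
      unfolding pexp_face_indicator_remove_mem[OF Suc.prems(1) i Suc.prems(2) \<open>i \<notin> B\<close>] by (rule unit[rotated])
  next
    assume i: "i \<in> B"
    then have iV: "i \<in> V" using Suc.prems(3) by auto
    have "pexp (V - {i}) K (face_indicator A (B - {i})) \<in> {0..1}"
      using Suc.hyps(2) Suc.prems finite i iV pos[of B i] pos[of V i]
      by (intro Suc.hyps(1)) auto
    moreover have "(real (card V) - K) / real (card V) \<in> {0..1}"
      using Suc.prems(5,6) pos[OF finite(2) i] by (auto simp: divide_le_eq_1)
    ultimately show ?case
      unfolding pexp_face_indicator_remove_nonmem[OF Suc.prems(1) i Suc.prems(3)] by (rule unit[rotated])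
  qed
qed

section \<open>The Laplacian of the transposition graph\<close>

definition laplacian :: "'a set \<Rightarrow> ('a set \<Rightarrow> real) \<Rightarrow> 'a set \<Rightarrow> real" where
  "laplacian V F X = (\<Sum>i\<in>V. \<Sum>k\<in>V. F X - F (transpose_set i k X))"

definition laplacian_eigenvalue :: "nat \<Rightarrow> nat \<Rightarrow> real" where
  "laplacian_eigenvalue N s = 2 * real s * (real N + 1 - real s)"

lemma laplacian_add: "laplacian V (\<lambda>X. F X + G X) X = laplacian V F X + laplacian V G X"
  unfolding laplacian_def by (simp add: sum.distrib[symmetric] algebra_simps)

lemma laplacian_diff: "laplacian V (\<lambda>X. F X - G X) X = laplacian V F X - laplacian V G X"
  unfolding laplacian_def by (simp add: sum_subtractf[symmetric] algebra_simps)

lemma laplacian_cmult: "laplacian V (\<lambda>X. c * F X) X = c * laplacian V F X"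
  unfolding laplacian_def by (simp add: sum_distrib_left algebra_simps)

lemma laplacian_cong:
  "finite V \<Longrightarrow> (\<And>X. X \<subseteq> V \<Longrightarrow> F X = G X) \<Longrightarrow> X \<subseteq> V \<Longrightarrow> laplacian V F X = laplacian V G X"
  unfolding laplacian_def by (intro sum.cong refl) (auto simp: transpose_set_subset)

lemma pexp_laplacian_selfadjoint:
  "pexp V K (\<lambda>X. G X * laplacian V F X) = pexp V K (\<lambda>X. laplacian V G X * F X)"
proof -
  have "pexp V K (\<lambda>X. G X * F (transpose_set i k X)) = pexp V K (\<lambda>X. G (transpose_set i k X) * F X)"
    if "i \<in> V" "k \<in> V" for i k
    using pexp_transpose[OF that, of K "\<lambda>X. G (transpose_set i k X) * F X"] by simp
  then show ?thesis
    unfolding laplacian_def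
    by (simp add: sum_distrib_left sum_distrib_right right_diff_distrib left_diff_distrib pexp_sum pexp_diff)
qed

lemma pexp_laplacian_form:
  "pexp V K (\<lambda>X. G X * laplacian V G X)
     = (\<Sum>i\<in>V. \<Sum>k\<in>V. pexp V K (\<lambda>X. (G X - G (transpose_set i k X))\<^sup>2)) / 2"
proof -
  have square: "pexp V K (\<lambda>X. (G X - G (transpose_set i k X))\<^sup>2)
      = 2 * (pexp V K (\<lambda>X. G X * G X) - pexp V K (\<lambda>X. G X * G (transpose_set i k X)))"
    if "i \<in> V" "k \<in> V" for i k
  proof -
    have "pexp V K (\<lambda>X. (G X - G (transpose_set i k X))\<^sup>2)
        = pexp V K (\<lambda>X. G X * G X) - 2 * pexp V K (\<lambda>X. G X * G (transpose_set i k X))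
          + pexp V K (\<lambda>X. G (transpose_set i k X) * G (transpose_set i k X))"
      unfolding pexp_add[symmetric] pexp_diff[symmetric] pexp_cmult[symmetric]
      by (rule pexp_cong) (simp add: power2_eq_square algebra_simps)
    then show ?thesis
      using pexp_transpose[OF that, of K "\<lambda>X. G X * G X"] by simp
  qed
  have "pexp V K (\<lambda>X. G X * laplacian V G X)
      = (\<Sum>i\<in>V. \<Sum>k\<in>V. pexp V K (\<lambda>X. G X * G X) - pexp V K (\<lambda>X. G X * G (transpose_set i k X)))"
    unfolding laplacian_def by (simp add: sum_distrib_left right_diff_distrib pexp_sum pexp_diff)
  also have "\<dots> = (\<Sum>i\<in>V. \<Sum>k\<in>V. pexp V K (\<lambda>X. (G X - G (transpose_set i k X))\<^sup>2) / 2)"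
    by (intro sum.cong refl) (simp add: square)
  finally show ?thesis by (simp add: sum_divide_distrib)
qed

lemma low_degree_laplacian:
  assumes "finite V" "low_degree V s F"
  shows "low_degree V s (laplacian V F)"
  using assms(2)
proof (induction rule: low_degree.induct)
  case (monomial S)
  have "low_degree V s (\<lambda>X. \<Sum>i\<in>V. \<Sum>k\<in>V. monomial S X - monomial (transpose_set i k S) X)"
    using monomial by (intro low_degree_sum[OF assms(1)] low_degree_diff low_degree.monomial)
      (auto simp: transpose_set_subset)
  then show ?case
    unfolding laplacian_def monomial_transpose .
next
  case (add F G)
  show ?case unfolding laplacian_add by (intro low_degree.add add.IH)
next
  case (cmult F c)
  show ?case unfolding laplacian_cmult by (intro low_degree.cmult cmult.IH)
next
  case (cong F G)
  then show ?case using laplacian_cong[OF assms(1), of G F] by (auto intro: low_degree.cong)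
qed

definition pexp_orth :: "'a set \<Rightarrow> real \<Rightarrow> nat \<Rightarrow> ('a set \<Rightarrow> real) \<Rightarrow> bool" where
  "pexp_orth V K t R \<longleftrightarrow> (\<forall>G. low_degree V t G \<longrightarrow> pexp V K (\<lambda>X. G X * R X) = 0)"

lemma pexp_orthD: "pexp_orth V K t R \<Longrightarrow> low_degree V t G \<Longrightarrow> pexp V K (\<lambda>X. G X * R X) = 0"
  unfolding pexp_orth_def by blast

lemma pexp_orth_zero: "pexp_orth V K t (\<lambda>X. 0)"
  unfolding pexp_orth_def by simp

lemma pexp_orth_add: "pexp_orth V K t R \<Longrightarrow> pexp_orth V K t R' \<Longrightarrow> pexp_orth V K t (\<lambda>X. R X + R' X)"
  unfolding pexp_orth_def by (simp add: distrib_left pexp_add)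

lemma pexp_orth_diff: "pexp_orth V K t R \<Longrightarrow> pexp_orth V K t R' \<Longrightarrow> pexp_orth V K t (\<lambda>X. R X - R' X)"
  unfolding pexp_orth_def by (simp add: right_diff_distrib pexp_diff)

lemma pexp_orth_cmult: "pexp_orth V K t R \<Longrightarrow> pexp_orth V K t (\<lambda>X. c * R X)"
  unfolding pexp_orth_def using pexp_cmult[of V K c] by (simp add: mult.left_commute)

lemma pexp_orth_cong: "pexp_orth V K t R \<Longrightarrow> (\<And>X. X \<subseteq> V \<Longrightarrow> R' X = R X) \<Longrightarrow> pexp_orth V K t R'"
  unfolding pexp_orth_def by (metis (no_types, lifting) pexp_cong)

lemma pexp_orth_laplacian: "finite V \<Longrightarrow> pexp_orth V K t R \<Longrightarrow> pexp_orth V K t (laplacian V R)"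
  unfolding pexp_orth_def by (simp add: pexp_laplacian_selfadjoint low_degree_laplacian)

lemma pexp_orth_card_constraint:
  assumes "finite V" "low_degree V s D" "t + s < card V"
  shows "pexp_orth V K t (\<lambda>X. (real (card X) - K) * D X)"
  unfolding pexp_orth_def
proof (intro allI impI)
  fix G assume "low_degree V t G"
  then have "low_degree V (t + s) (\<lambda>X. G X * D X)" using assms(2) by (rule low_degree_mult)
  then have "pexp V K (\<lambda>X. (real (card X) - K) * (G X * D X)) = 0"
    using assms(1,3) by (intro pexp_card_constraint)
  then show "pexp V K (\<lambda>X. G X * ((real (card X) - K) * D X)) = 0"
    by (simp add: algebra_simps)
qed

lemma transpose_set_exchange: "i \<in> S \<Longrightarrow> k \<notin> S \<Longrightarrow> transpose_set i k S = insert k (S - {i})"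
  by (auto simp: in_transpose_image_iff Transposition.transpose_def split: if_splits)

lemma sum_transpose_monomial:
  assumes "finite V" "S \<subseteq> V"
  shows "(\<Sum>i\<in>V. \<Sum>k\<in>V. monomial (transpose_set i k S) X)
       = (real (card S) ^ 2 + real (card (V - S)) ^ 2) * monomial S X
         + 2 * (\<Sum>i\<in>S. \<Sum>k\<in>V - S. monomial (insert k (S - {i})) X)"
proof -
  have split: "(\<Sum>i\<in>V. g i) = (\<Sum>i\<in>S. g i) + (\<Sum>i\<in>V - S. g i)" for g :: "'a \<Rightarrow> real"
    using sum.subset_diff[OF assms(2,1)] by (simp add: add.commute)
  have same: "transpose_set i k S = S" if "i \<in> S \<longleftrightarrow> k \<in> S" for i k
    using that by simp
  have "(\<Sum>i\<in>S. \<Sum>k\<in>S. monomial (transpose_set i k S) X) = real (card S) ^ 2 * monomial S X"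
    by (simp add: same power2_eq_square)
  moreover have "(\<Sum>i\<in>V - S. \<Sum>k\<in>V - S. monomial (transpose_set i k S) X)
      = real (card (V - S)) ^ 2 * monomial S X"
    by (simp add: same power2_eq_square)
  moreover have "(\<Sum>i\<in>S. \<Sum>k\<in>V - S. monomial (transpose_set i k S) X)
      = (\<Sum>i\<in>S. \<Sum>k\<in>V - S. monomial (insert k (S - {i})) X)"
    by (intro sum.cong refl) (simp add: transpose_set_exchange)
  moreover have "(\<Sum>i\<in>V - S. \<Sum>k\<in>S. monomial (transpose_set i k S) X)
      = (\<Sum>i\<in>S. \<Sum>k\<in>V - S. monomial (insert k (S - {i})) X)"
    by (subst sum.swap) (intro sum.cong refl, simp add: transpose_commute transpose_set_exchange)
  ultimately show ?thesis
    by (simp add: split sum.distrib power2_eq_square algebra_simps)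
qed

lemma sum_monomial_exchange:
  assumes "finite V" "X \<subseteq> V" "i \<in> S"
  shows "(\<Sum>k\<in>V - S. monomial (insert k (S - {i})) X)
       = (real (card X) - real (card S) + 1) * monomial (S - {i}) X - monomial S X"
proof (cases "S - {i} \<subseteq> X")
  case True
  have X: "finite X" using assms finite_subset by blast
  then have "finite S" using True finite_subset[of "S - {i}" X] by simp
  then have S: "real (card (S - {i})) = real (card S) - 1"
  proof -
    have "card S \<ge> 1" using \<open>finite S\<close> assms(3) by (metis One_nat_def Suc_leI card_gt_0_iff empty_iff)
    then show ?thesis using \<open>finite S\<close> assms(3) by simp
  qed
  have "(\<Sum>k\<in>V - S. monomial (insert k (S - {i})) X) = real (card ((V - S) \<inter> X))"
    using True assms(1) by (simp add: monomial_def of_bool_def sum.If_cases)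
  also have "(V - S) \<inter> X = X - (S \<inter> X)" using assms(2) by auto
  also have "real (card (X - (S \<inter> X))) = real (card X) - real (card (S \<inter> X))"
    using X by (simp add: card_Diff_subset card_mono)
  also have "S \<inter> X = (if i \<in> X then S else S - {i})" using True assms(3) by auto
  finally show ?thesis
    using True assms(3) S by (auto simp: monomial_def)
next
  case False
  then show ?thesis by (auto simp: monomial_def)
qed

lemma laplacian_monomial:
  assumes "finite V" "S \<subseteq> V" "X \<subseteq> V"
  shows "laplacian V (monomial S) X = laplacian_eigenvalue (card V) (card S) * monomial S X
           - 2 * (real (card X) - real (card S) + 1) * (\<Sum>i\<in>S. monomial (S - {i}) X)"
proof -
  have outside: "real (card (V - S)) = real (card V) - real (card S)"
    using assms by (simp add: card_Diff_subset card_mono finite_subset)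
  have exchange: "(\<Sum>i\<in>S. \<Sum>k\<in>V - S. monomial (insert k (S - {i})) X)
      = (real (card X) - real (card S) + 1) * (\<Sum>i\<in>S. monomial (S - {i}) X) - real (card S) * monomial S X"
    using assms by (simp add: sum_monomial_exchange sum_subtractf sum_distrib_left)
  show ?thesis
    unfolding laplacian_def monomial_transpose sum_subtractf sum_constant
      sum_transpose_monomial[OF assms(1,2)] outside exchange
    by (simp add: laplacian_eigenvalue_def power2_eq_square algebra_simps)
qed

lemma laplacian_monomial_triangular:
  assumes "finite V" "S \<subseteq> V" "card S \<le> s" "1 \<le> s" "s \<le> t" "2 * t \<le> card V"
  shows "\<exists>F'. low_degree V (s - 1) F' \<and>
           pexp_orth V K t (\<lambda>X. laplacian V (monomial S) X - laplacian_eigenvalue (card V) s * monomial S X - F' X)"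
proof -
  define r where "r = card S"
  define D where "D = (\<lambda>X. \<Sum>i\<in>S. monomial (S - {i}) X)"
  define F' where "F' = (\<lambda>X. (laplacian_eigenvalue (card V) r - laplacian_eigenvalue (card V) s) * monomial S X
                              - 2 * (K - real r + 1) * D X)"
  have "finite S" using assms(1,2) finite_subset by blast
  then have D: "low_degree V (s - 1) D"
    unfolding D_def using assms(2,3)
    by (intro low_degree_sum low_degree.monomial) (auto simp: card_Diff_singleton)
  have top: "low_degree V (s - 1)
      (\<lambda>X. (laplacian_eigenvalue (card V) r - laplacian_eigenvalue (card V) s) * monomial S X)"
  proof (cases "r = s")
    case True
    then show ?thesis using low_degree_const[of V "s - 1" 0] by simp
  next
    case False
    then show ?thesis using assms(2,3) by (intro low_degree.cmult low_degree.monomial) (auto simp: r_def)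
  qed
  have F': "low_degree V (s - 1) F'"
    unfolding F'_def by (intro low_degree_diff top low_degree.cmult D)
  have "t + (s - 1) < card V" using assms(4-6) by linarith
  then have "pexp_orth V K t (\<lambda>X. -2 * ((real (card X) - K) * D X))"
    by (intro pexp_orth_cmult pexp_orth_card_constraint[OF assms(1) D])
  then have "pexp_orth V K t
      (\<lambda>X. laplacian V (monomial S) X - laplacian_eigenvalue (card V) s * monomial S X - F' X)"
    by (rule pexp_orth_cong)
      (simp add: laplacian_monomial[OF assms(1,2)] F'_def D_def r_def algebra_simps)
  with F' show ?thesis by blast
qed

text \<open>
  Modulo functions orthogonal to degree t, the Laplacian is triangular with respect to the degree,
  with diagonal entries laplacian_eigenvalue (card V) s; the constraint |X| = K enters through
  pexp_orth_card_constraint.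
\<close>

lemma laplacian_triangular:
  assumes "finite V" "low_degree V s F" "1 \<le> s" "s \<le> t" "2 * t \<le> card V"
  shows "\<exists>F'. low_degree V (s - 1) F' \<and>
           pexp_orth V K t (\<lambda>X. laplacian V F X - laplacian_eigenvalue (card V) s * F X - F' X)"
  using assms(2)
proof (induction rule: low_degree.induct)
  case (monomial S)
  then show ?case using laplacian_monomial_triangular[OF assms(1) _ _ assms(3-5)] by blast
next
  case (add F G)
  then obtain F1 F2 where F1: "low_degree V (s - 1) F1" and F2: "low_degree V (s - 1) F2"
    and orth1: "pexp_orth V K t (\<lambda>X. laplacian V F X - laplacian_eigenvalue (card V) s * F X - F1 X)"
    and orth2: "pexp_orth V K t (\<lambda>X. laplacian V G X - laplacian_eigenvalue (card V) s * G X - F2 X)"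
    by blast
  have "pexp_orth V K t (\<lambda>X. laplacian V (\<lambda>X. F X + G X) X
      - laplacian_eigenvalue (card V) s * (F X + G X) - (F1 X + F2 X))"
    by (rule pexp_orth_cong[OF pexp_orth_add[OF orth1 orth2]]) (simp add: laplacian_add algebra_simps)
  then show ?case using low_degree.add[OF F1 F2] by blast
next
  case (cmult F c)
  then obtain F1 where F1: "low_degree V (s - 1) F1"
    and orth: "pexp_orth V K t (\<lambda>X. laplacian V F X - laplacian_eigenvalue (card V) s * F X - F1 X)"
    by blast
  have "pexp_orth V K t (\<lambda>X. laplacian V (\<lambda>X. c * F X) X
      - laplacian_eigenvalue (card V) s * (c * F X) - c * F1 X)"
    by (rule pexp_orth_cong[OF pexp_orth_cmult[OF orth, of c]]) (simp add: laplacian_cmult algebra_simps)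
  then show ?case using low_degree.cmult[OF F1, of c] by blast
next
  case (cong F G)
  then obtain F1 where F1: "low_degree V (s - 1) F1"
    and orth: "pexp_orth V K t (\<lambda>X. laplacian V F X - laplacian_eigenvalue (card V) s * F X - F1 X)"
    by blast
  have "pexp_orth V K t (\<lambda>X. laplacian V G X - laplacian_eigenvalue (card V) s * G X - F1 X)"
  proof (rule pexp_orth_cong[OF orth])
    fix X assume "X \<subseteq> V"
    then show "laplacian V G X - laplacian_eigenvalue (card V) s * G X - F1 X
        = laplacian V F X - laplacian_eigenvalue (card V) s * F X - F1 X"
      using laplacian_cong[OF assms(1) cong(2)] cong(2) by simp
  qed
  then show ?case using F1 by blast
qed

fun laplacian_prod :: "'a set \<Rightarrow> nat \<Rightarrow> ('a set \<Rightarrow> real) \<Rightarrow> 'a set \<Rightarrow> real" where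
  "laplacian_prod V 0 F = F"
| "laplacian_prod V (Suc j) F =
     (\<lambda>X. laplacian V (laplacian_prod V j F) X - laplacian_eigenvalue (card V) j * laplacian_prod V j F X)"

lemma laplacian_prod_add:
  "laplacian_prod V j (\<lambda>X. F X + G X) = (\<lambda>X. laplacian_prod V j F X + laplacian_prod V j G X)"
  by (induction j) (simp_all add: laplacian_add algebra_simps)

lemma laplacian_prod_cmult: "laplacian_prod V j (\<lambda>X. c * F X) = (\<lambda>X. c * laplacian_prod V j F X)"
  by (induction j) (simp_all add: laplacian_cmult algebra_simps)

lemma laplacian_prod_diff:
  "laplacian_prod V j (\<lambda>X. F X - G X) = (\<lambda>X. laplacian_prod V j F X - laplacian_prod V j G X)"
  using laplacian_prod_add[of V j F "\<lambda>X. (-1) * G X"] unfolding laplacian_prod_cmult by simp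

lemma laplacian_prod_laplacian: "laplacian_prod V j (laplacian V F) = laplacian V (laplacian_prod V j F)"
  by (induction j) (simp_all add: laplacian_diff laplacian_cmult)

lemma laplacian_prod_Suc':
  "laplacian_prod V (Suc j) F = laplacian_prod V j (\<lambda>X. laplacian V F X - laplacian_eigenvalue (card V) j * F X)"
  unfolding laplacian_prod_diff laplacian_prod_cmult by (simp add: laplacian_prod_laplacian)

lemma pexp_laplacian_prod_selfadjoint:
  "pexp V K (\<lambda>X. G X * laplacian_prod V j F X) = pexp V K (\<lambda>X. laplacian_prod V j G X * F X)"
proof (induction j arbitrary: F G)
  case (Suc j)
  have "pexp V K (\<lambda>X. G X * laplacian_prod V (Suc j) F X)
      = pexp V K (\<lambda>X. G X * laplacian V (laplacian_prod V j F) X)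
        - laplacian_eigenvalue (card V) j * pexp V K (\<lambda>X. G X * laplacian_prod V j F X)"
    unfolding pexp_cmult[symmetric] pexp_diff[symmetric] by (simp add: algebra_simps)
  also have "\<dots> = pexp V K (\<lambda>X. laplacian_prod V j (laplacian V G) X * F X)
        - laplacian_eigenvalue (card V) j * pexp V K (\<lambda>X. laplacian_prod V j G X * F X)"
    by (simp add: pexp_laplacian_selfadjoint Suc.IH)
  also have "\<dots> = pexp V K (\<lambda>X. laplacian_prod V (Suc j) G X * F X)"
    unfolding pexp_cmult[symmetric] pexp_diff[symmetric] laplacian_prod_laplacian
    by (simp add: algebra_simps)
  finally show ?case .
qed simp

lemma low_degree_laplacian_prod: "finite V \<Longrightarrow> low_degree V s F \<Longrightarrow> low_degree V s (laplacian_prod V j F)"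
  by (induction j) (simp_all add: low_degree_diff low_degree.cmult low_degree_laplacian)

lemma pexp_orth_laplacian_prod: "finite V \<Longrightarrow> pexp_orth V K t R \<Longrightarrow> pexp_orth V K t (laplacian_prod V j R)"
  by (induction j) (simp_all add: pexp_orth_diff pexp_orth_cmult pexp_orth_laplacian)

lemma low_degree_0_const:
  assumes "finite V" "low_degree V 0 F"
  shows "\<exists>c. \<forall>X. X \<subseteq> V \<longrightarrow> F X = c"
  using assms(2)
proof (induction rule: low_degree.induct)
  case (monomial S)
  then have "S = {}" using assms(1) by (metis card_0_eq finite_subset le_0_eq)
  then show ?case by (auto simp: monomial_def)
qed fastforce+

lemma pexp_orth_laplacian_prod_Suc:
  assumes "finite V" "2 * t \<le> card V"
  shows "s \<le> t \<Longrightarrow> low_degree V s F \<Longrightarrow> pexp_orth V K t (laplacian_prod V (Suc s) F)"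
proof (induction s arbitrary: F)
  case 0
  obtain c where c: "\<And>X. X \<subseteq> V \<Longrightarrow> F X = c" using low_degree_0_const[OF assms(1) 0(2)] by blast
  have "laplacian V F X = 0" if "X \<subseteq> V" for X
    unfolding laplacian_def using that by (intro sum.neutral ballI) (simp add: c transpose_set_subset)
  then show ?case
    by (intro pexp_orth_cong[OF pexp_orth_zero]) (simp add: laplacian_eigenvalue_def)
next
  case (Suc s)
  obtain F' where F': "low_degree V s F'"
    and R: "pexp_orth V K t (\<lambda>X. laplacian V F X - laplacian_eigenvalue (card V) (Suc s) * F X - F' X)"
    using laplacian_triangular[OF assms(1) Suc(3) _ Suc(2) assms(2), of K] by auto
  have "laplacian_prod V (Suc (Suc s)) F = laplacian_prod V (Suc s)
      (\<lambda>X. F' X + (laplacian V F X - laplacian_eigenvalue (card V) (Suc s) * F X - F' X))"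
    unfolding laplacian_prod_Suc'[of V "Suc s" F] by simp
  also have "\<dots> = (\<lambda>X. laplacian_prod V (Suc s) F' X + laplacian_prod V (Suc s)
      (\<lambda>X. laplacian V F X - laplacian_eigenvalue (card V) (Suc s) * F X - F' X) X)"
    by (rule laplacian_prod_add)
  finally show ?case
    using Suc.IH[OF _ F'] Suc(2) pexp_orth_laplacian_prod[OF assms(1) R]
    by (simp only: pexp_orth_add Suc_leD)
qed

definition eigenvalue_gaps :: "nat \<Rightarrow> nat \<Rightarrow> nat \<Rightarrow> real" where
  "eigenvalue_gaps N t j = (\<Prod>l<j. laplacian_eigenvalue N t - laplacian_eigenvalue N l)"

lemma eigenvalue_gaps_pos: "2 * t \<le> N \<Longrightarrow> eigenvalue_gaps N t t > 0"
  unfolding eigenvalue_gaps_def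
proof (rule prod_pos)
  fix l assume "2 * t \<le> N" "l \<in> {..<t}"
  moreover have "laplacian_eigenvalue N t - laplacian_eigenvalue N l
      = 2 * (real t - real l) * (real N + 1 - real t - real l)"
    unfolding laplacian_eigenvalue_def by (simp add: algebra_simps)
  ultimately show "laplacian_eigenvalue N t - laplacian_eigenvalue N l > 0" by simp
qed

lemma laplacian_prod_triangular:
  assumes "finite V" "2 * t \<le> card V" "1 \<le> t" "low_degree V t F"
  shows "\<exists>F1. low_degree V (t - 1) F1 \<and>
           pexp_orth V K t (\<lambda>X. laplacian_prod V j F X - eigenvalue_gaps (card V) t j * F X - F1 X)"
proof (induction j)
  case 0
  have "pexp_orth V K t (\<lambda>X. laplacian_prod V 0 F X - eigenvalue_gaps (card V) t 0 * F X - 0)"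
    by (rule pexp_orth_cong[OF pexp_orth_zero]) (simp add: eigenvalue_gaps_def)
  then show ?case using low_degree_const by blast
next
  case (Suc j)
  then obtain F1 where F1: "low_degree V (t - 1) F1"
    and R1: "pexp_orth V K t (\<lambda>X. laplacian_prod V j F X - eigenvalue_gaps (card V) t j * F X - F1 X)"
    by blast
  obtain F2 where F2: "low_degree V (t - 1) F2"
    and R2: "pexp_orth V K t (\<lambda>X. laplacian V F X - laplacian_eigenvalue (card V) t * F X - F2 X)"
    using laplacian_triangular[OF assms(1,4,3) le_refl assms(2), of K] by blast
  define c where "c = eigenvalue_gaps (card V) t j"
  define l where "l = laplacian_eigenvalue (card V) j"
  define F1' where "F1' = (\<lambda>X. c * F2 X + (laplacian V F1 X - l * F1 X))"
  have "low_degree V (t - 1) F1'"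
    unfolding F1'_def by (intro low_degree.add low_degree.cmult low_degree_diff F2 F1 low_degree_laplacian assms(1))
  moreover have "pexp_orth V K t (\<lambda>X. laplacian_prod V (Suc j) F X - eigenvalue_gaps (card V) t (Suc j) * F X - F1' X)"
  proof (rule pexp_orth_cong[OF pexp_orth_add[OF pexp_orth_cmult[OF R2]
          pexp_orth_diff[OF pexp_orth_laplacian[OF assms(1) R1] pexp_orth_cmult[OF R1]]]])
    fix X
    have gaps: "eigenvalue_gaps (card V) t (Suc j) = c * (laplacian_eigenvalue (card V) t - l)"
      unfolding eigenvalue_gaps_def c_def l_def by simp
    show "laplacian_prod V (Suc j) F X - eigenvalue_gaps (card V) t (Suc j) * F X - F1' X =
      c * (laplacian V F X - laplacian_eigenvalue (card V) t * F X - F2 X) +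
      (laplacian V (\<lambda>X. laplacian_prod V j F X - eigenvalue_gaps (card V) t j * F X - F1 X) X
        - l * (laplacian_prod V j F X - eigenvalue_gaps (card V) t j * F X - F1 X))"
      unfolding F1'_def gaps laplacian_diff laplacian_cmult by (simp add: c_def l_def algebra_simps)
  qed
  ultimately show ?case by blast
qed

section \<open>Nonnegativity on squares\<close>

text \<open>Conditioning on i and k: the difference vanishes unless exactly one of i and k lies in X.\<close>

lemma pexp_transpose_difference:
  assumes "finite V" "i \<in> V" "k \<in> V" "i \<noteq> k"
  shows "pexp V K (\<lambda>X. (G X - G (transpose_set i k X))\<^sup>2)
       = 2 * (K * (real (card V) - K) / (real (card V) * (real (card V) - 1)))
         * pexp (V - {i, k}) (K - 1) (\<lambda>X. (G (insert i X) - G (insert k X))\<^sup>2)"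
proof -
  define f where "f = (\<lambda>X. (G X - G (transpose_set i k X))\<^sup>2)"
  define P where "P = pexp (V - {i, k}) (K - 1) (\<lambda>X. (G (insert i X) - G (insert k X))\<^sup>2)"
  define N where "N = real (card V)"
  have V1: "finite (V - {i})" "k \<in> V - {i}" "V - {i} - {k} = V - {i, k}" using assms by auto
  have "card V \<ge> 1" using assms(1,2) by (metis One_nat_def Suc_leI card_gt_0_iff empty_iff)
  then have N1: "real (card (V - {i})) = N - 1"
    using assms by (simp add: N_def)
  have fixed: "f (insert i (insert k X)) = 0" "f X = 0" if "X \<subseteq> V - {i} - {k}" for X
  proof -
    have "i \<notin> X" "k \<notin> X" using that by auto
    then have "transpose_set i k (insert i (insert k X)) = insert i (insert k X)" "transpose_set i k X = X"
      by (simp_all add: insert_commute)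
    then show "f (insert i (insert k X)) = 0" "f X = 0" by (simp_all add: f_def)
  qed
  have swapped: "f (insert i X) = (G (insert i X) - G (insert k X))\<^sup>2"
    "f (insert k X) = (G (insert i X) - G (insert k X))\<^sup>2" if "X \<subseteq> V - {i} - {k}" for X
  proof -
    have "i \<notin> X" "k \<notin> X" using that by auto
    then have "transpose_set i k X = X" by simp
    then show "f (insert i X) = (G (insert i X) - G (insert k X))\<^sup>2"
      "f (insert k X) = (G (insert i X) - G (insert k X))\<^sup>2"
      by (simp_all add: f_def power2_commute)
  qed
  have "pexp (V - {i}) (K - 1) (\<lambda>X. f (insert i X))
      = (real (card (V - {i})) - (K - 1)) / real (card (V - {i})) * pexp (V - {i} - {k}) (K - 1) (\<lambda>X. f (insert i X))"
    by (rule pexp_remove_nonmem[OF V1(1,2)]) (rule fixed(1))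
  also have "pexp (V - {i} - {k}) (K - 1) (\<lambda>X. f (insert i X)) = P"
    unfolding P_def V1(3)[symmetric] by (rule pexp_cong) (rule swapped(1))
  moreover have "pexp (V - {i}) K f = K / real (card (V - {i})) * pexp (V - {i} - {k}) (K - 1) (\<lambda>X. f (insert k X))"
    by (rule pexp_remove_mem[OF V1(1,2)]) (rule fixed(2))
  moreover have "pexp (V - {i} - {k}) (K - 1) (\<lambda>X. f (insert k X)) = P"
    unfolding P_def V1(3)[symmetric] by (rule pexp_cong) (rule swapped(2))
  ultimately have "pexp V K f = K / N * ((N - 1 - (K - 1)) / (N - 1) * P) + (N - K) / N * (K / (N - 1) * P)"
    unfolding pexp_remove[OF assms(1,2), of K f] N1 N_def by simp
  also have "\<dots> = 2 * (K * (N - K) / (N * (N - 1))) * P"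
    by (simp add: field_simps)
  finally show ?thesis unfolding f_def N_def P_def .
qed

lemma low_degree_insert_diff:
  assumes "finite V" "low_degree V s G" "i \<in> V" "k \<in> V" "i \<noteq> k"
  shows "low_degree (V - {i, k}) (s - 1) (\<lambda>X. G (insert i X) - G (insert k X))"
  using assms(2)
proof (induction rule: low_degree.induct)
  case (monomial S)
  have "finite S" using monomial assms(1) finite_subset by auto
  then have low: "low_degree (V - {i, k}) (s - 1) (monomial (S - {j}))" if "j \<in> S" "S - {j} \<subseteq> V - {i, k}" for j
    using monomial that by (intro low_degree.monomial) auto
  consider "i \<in> S \<longleftrightarrow> k \<in> S" | "i \<in> S" "k \<notin> S" | "i \<notin> S" "k \<in> S" by blast
  then show ?case
  proof cases
    case 1
    show ?thesis
      by (rule low_degree.cong[OF low_degree_const[of _ _ 0]]) (use 1 in \<open>auto simp: monomial_def\<close>)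
  next
    case 2
    show ?thesis
      by (rule low_degree.cong[OF low[of i]]) (use 2 monomial(1) assms(5) in \<open>auto simp: monomial_def\<close>)
  next
    case 3
    show ?thesis
      by (rule low_degree.cong[OF low_degree.cmult[OF low[of k], of "-1"]])
        (use 3 monomial(1) assms(5) in \<open>auto simp: monomial_def\<close>)
  qed
next
  case (add F G)
  then show ?case by (rule_tac low_degree.cong[OF low_degree.add[OF add.IH]]) simp
next
  case (cmult F c)
  then show ?case by (rule_tac low_degree.cong[OF low_degree.cmult[OF cmult.IH, of c]]) (simp add: algebra_simps)
next
  case (cong F G)
  show ?case
  proof (rule low_degree.cong[OF cong.IH])
    fix X assume "X \<subseteq> V - {i, k}"
    then have "insert i X \<subseteq> V" "insert k X \<subseteq> V" using assms(3,4) by auto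
    then show "G (insert i X) - G (insert k X) = F (insert i X) - F (insert k X)" using cong(2) by simp
  qed
qed

lemma pexp_laplacian_form_nonneg:
  assumes "finite V" "0 \<le> K" "K \<le> real (card V)"
    and "\<And>i k. i \<in> V \<Longrightarrow> k \<in> V \<Longrightarrow> i \<noteq> k \<Longrightarrow>
           0 \<le> pexp (V - {i, k}) (K - 1) (\<lambda>X. (G (insert i X) - G (insert k X))\<^sup>2)"
  shows "0 \<le> pexp V K (\<lambda>X. G X * laplacian V G X)"
proof -
  have "0 \<le> pexp V K (\<lambda>X. (G X - G (transpose_set i k X))\<^sup>2)" if "i \<in> V" "k \<in> V" for i k
  proof (cases "i = k")
    case False
    then have "2 \<le> card V" using that card_mono[OF assms(1), of "{i, k}"] by simp
    then have "0 \<le> 2 * (K * (real (card V) - K) / (real (card V) * (real (card V) - 1)))"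
      using assms(2,3) by simp
    then show ?thesis
      unfolding pexp_transpose_difference[OF assms(1) that False]
      using assms(4)[OF that False] by (rule mult_nonneg_nonneg)
  qed simp
  then show ?thesis
    unfolding pexp_laplacian_form by (simp add: sum_nonneg)
qed

lemma pexp_square_eq_of_orth:
  assumes "low_degree V t F" "low_degree V t G" "pexp_orth V K t (\<lambda>X. F X - G X)"
  shows "pexp V K (\<lambda>X. (F X)\<^sup>2) = pexp V K (\<lambda>X. (G X)\<^sup>2)"
proof -
  have "pexp V K (\<lambda>X. (F X)\<^sup>2) - pexp V K (\<lambda>X. (G X)\<^sup>2)
      = pexp V K (\<lambda>X. F X * (F X - G X)) + pexp V K (\<lambda>X. G X * (F X - G X))"
    unfolding pexp_diff[symmetric] pexp_add[symmetric] by (rule pexp_cong) (simp add: power2_eq_square algebra_simps)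
  then show ?thesis
    using pexp_orthD[OF assms(3) assms(1)] pexp_orthD[OF assms(3) assms(2)] by simp
qed

text \<open>
  T is laplacian_prod V t F divided by eigenvalue_gaps (card V) t t, the component of F on the top
  eigenvalue; the remainder R has lower degree.
\<close>

lemma top_eigencomponent:
  assumes "finite V" "2 * t \<le> card V" "1 \<le> t" "low_degree V t F"
  obtains T R where "low_degree V t T" "low_degree V (t - 1) R"
    "pexp_orth V K t (\<lambda>X. F X - (T X + R X))"
    "pexp_orth V K t (\<lambda>X. laplacian V T X - laplacian_eigenvalue (card V) t * T X)"
    "pexp V K (\<lambda>X. T X * R X) = 0"
proof -
  define c where "c = eigenvalue_gaps (card V) t t"
  have c: "c > 0" unfolding c_def by (rule eigenvalue_gaps_pos[OF assms(2)])
  obtain F1 where F1: "low_degree V (t - 1) F1"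
    and approx: "pexp_orth V K t (\<lambda>X. laplacian_prod V t F X - c * F X - F1 X)"
    using laplacian_prod_triangular[OF assms, of K t] unfolding c_def by blast
  define T where "T = (\<lambda>X. inverse c * laplacian_prod V t F X)"
  define R where "R = (\<lambda>X. - inverse c * F1 X)"
  show thesis
  proof (rule that)
    show T: "low_degree V t T"
      unfolding T_def by (intro low_degree.cmult low_degree_laplacian_prod assms(1,4))
    show "low_degree V (t - 1) R"
      unfolding R_def by (intro low_degree.cmult F1)
    show "pexp_orth V K t (\<lambda>X. F X - (T X + R X))"
      by (rule pexp_orth_cong[OF pexp_orth_cmult[OF approx, of "- inverse c"]])
        (use c in \<open>simp add: T_def R_def field_simps\<close>)
    show "pexp_orth V K t (\<lambda>X. laplacian V T X - laplacian_eigenvalue (card V) t * T X)"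
      using pexp_orth_cmult[OF pexp_orth_laplacian_prod_Suc[OF assms(1,2) le_refl assms(4)], of K "inverse c"]
      by (simp add: T_def laplacian_cmult algebra_simps)
    have "pexp_orth V K t (laplacian_prod V t F1)"
      using pexp_orth_laplacian_prod_Suc[OF assms(1,2) _ F1, of K] assms(3) by simp
    then have "pexp V K (\<lambda>X. F X * laplacian_prod V t F1 X) = 0"
      using assms(4) by (rule pexp_orthD)
    moreover have "pexp V K (\<lambda>X. F1 X * laplacian_prod V t F X) = pexp V K (\<lambda>X. F X * laplacian_prod V t F1 X)"
      by (subst pexp_laplacian_prod_selfadjoint) (simp only: mult.commute)
    ultimately have "pexp V K (\<lambda>X. F1 X * laplacian_prod V t F X) = 0" by simp
    then show "pexp V K (\<lambda>X. T X * R X) = 0"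
      using pexp_cmult[of V K "- inverse c * inverse c" "\<lambda>X. F1 X * laplacian_prod V t F X"]
      by (simp add: T_def R_def algebra_simps)
  qed
qed

lemma pexp_square_split:
  assumes "low_degree V t F" "low_degree V t T" "low_degree V t R"
    "pexp_orth V K t (\<lambda>X. F X - (T X + R X))" "pexp V K (\<lambda>X. T X * R X) = 0"
  shows "pexp V K (\<lambda>X. (F X)\<^sup>2) = pexp V K (\<lambda>X. (T X)\<^sup>2) + pexp V K (\<lambda>X. (R X)\<^sup>2)"
proof -
  have "pexp V K (\<lambda>X. (F X)\<^sup>2) = pexp V K (\<lambda>X. (T X + R X)\<^sup>2)"
    using assms(2,3) by (intro pexp_square_eq_of_orth[OF assms(1) _ assms(4)] low_degree.add)
  also have "\<dots> = pexp V K (\<lambda>X. (T X)\<^sup>2) + pexp V K (\<lambda>X. (R X)\<^sup>2)"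
    using assms(5) pexp_cmult[of V K 2 "\<lambda>X. T X * R X"]
    unfolding power2_sum pexp_add by (simp add: mult.assoc)
  finally show ?thesis .
qed

lemma pexp_eigen_form:
  assumes "low_degree V t T" "pexp_orth V K t (\<lambda>X. laplacian V T X - ev * T X)"
  shows "pexp V K (\<lambda>X. T X * laplacian V T X) = ev * pexp V K (\<lambda>X. (T X)\<^sup>2)"
proof -
  have "pexp V K (\<lambda>X. T X * laplacian V T X) - ev * pexp V K (\<lambda>X. (T X)\<^sup>2)
      = pexp V K (\<lambda>X. T X * (laplacian V T X - ev * T X))"
    unfolding pexp_cmult[symmetric] pexp_diff[symmetric]
    by (rule pexp_cong) (simp add: power2_eq_square algebra_simps)
  then show ?thesis using pexp_orthD[OF assms(2,1)] by simp
qed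

theorem pexp_square_nonneg:
  assumes "finite V" "2 * t \<le> card V" "real t - 1 \<le> K" "K \<le> real (card V) - real t + 1"
    "low_degree V t F"
  shows "0 \<le> pexp V K (\<lambda>X. (F X)\<^sup>2)"
  using assms
proof (induction t arbitrary: V K F)
  case 0
  obtain c where "\<And>X. X \<subseteq> V \<Longrightarrow> F X = c" using low_degree_0_const[OF 0(1,5)] by blast
  then have "pexp V K (\<lambda>X. (F X)\<^sup>2) = c\<^sup>2"
    using pexp_cong[of V "\<lambda>X. (F X)\<^sup>2" "\<lambda>X. c\<^sup>2"] pexp_const[OF 0(1)] by simp
  then show ?case by simp
next
  case (Suc t)
  have "1 \<le> Suc t" by simp
  then obtain T R where T: "low_degree V (Suc t) T" and R: "low_degree V t R"
    and decomp: "pexp_orth V K (Suc t) (\<lambda>X. F X - (T X + R X))"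
    and eigen: "pexp_orth V K (Suc t) (\<lambda>X. laplacian V T X - laplacian_eigenvalue (card V) (Suc t) * T X)"
    and cross: "pexp V K (\<lambda>X. T X * R X) = 0"
    by (rule top_eigencomponent[OF Suc.prems(1,2) _ Suc.prems(5)]) auto
  have "0 \<le> pexp V K (\<lambda>X. T X * laplacian V T X)"
  proof (rule pexp_laplacian_form_nonneg)
    fix i k assume ik: "i \<in> V" "k \<in> V" "i \<noteq> k"
    then have card: "card (V - {i, k}) = card V - 2" using Suc.prems(1) by (simp add: card_Diff_subset)
    show "0 \<le> pexp (V - {i, k}) (K - 1) (\<lambda>X. (T (insert i X) - T (insert k X))\<^sup>2)"
    proof (rule Suc.IH)
      show "finite (V - {i, k})" using Suc.prems(1) by simp
      show "2 * t \<le> card (V - {i, k})" using card Suc.prems(2) by simp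
      show "real t - 1 \<le> K - 1" using Suc.prems(3) by simp
      show "K - 1 \<le> real (card (V - {i, k})) - real t + 1" using card Suc.prems(2,4) by simp
      show "low_degree (V - {i, k}) t (\<lambda>X. T (insert i X) - T (insert k X))"
        using low_degree_insert_diff[OF Suc.prems(1) T ik] by simp
    qed
  qed (use Suc.prems in auto)
  moreover have "laplacian_eigenvalue (card V) (Suc t) > 0"
    using Suc.prems(2) by (simp add: laplacian_eigenvalue_def)
  ultimately have "0 \<le> pexp V K (\<lambda>X. (T X)\<^sup>2)"
    unfolding pexp_eigen_form[OF T eigen] by (simp add: zero_le_mult_iff)
  moreover have "0 \<le> pexp V K (\<lambda>X. (R X)\<^sup>2)"
    by (rule Suc.IH) (use Suc.prems R in auto)
  ultimately show ?case
    using pexp_square_split[OF Suc.prems(5) T low_degree_mono[OF R] decomp cross] by simp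
qed

section \<open>The hard instance\<close>

definition cluster_points :: "nat \<Rightarrow> nat set" where
  "cluster_points n = {..<8 * n}"

definition red_points :: "nat \<Rightarrow> nat set" where
  "red_points n = {..<4 * n}"

definition cluster_dist :: "real \<Rightarrow> nat \<Rightarrow> nat \<Rightarrow> real" where
  "cluster_dist D p q = (if p = q then 0 else if p div 4 = q div 4 then 1 else D)"

definition cluster :: "nat \<Rightarrow> nat set" where
  "cluster q = {q * 4..<q * 4 + 4}"

lemma mem_cluster: "p \<in> cluster q \<longleftrightarrow> p div 4 = q"
  unfolding cluster_def by auto

lemma card_cluster: "card (cluster q) = 4"
  by (simp add: cluster_def)

lemma cluster_points_eq: "cluster_points n = {..<2 * n * 4}"
  by (simp add: cluster_points_def mult.commute)

lemma finite_cluster_points: "finite (cluster_points n)"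
  by (simp add: cluster_points_def)

lemma red_points_subset: "red_points n \<subseteq> cluster_points n"
  by (auto simp: red_points_def cluster_points_def)

lemma metric_on_cluster_dist: "1 \<le> D \<Longrightarrow> metric_on P (cluster_dist D)"
  unfolding metric_on_def cluster_dist_def by auto

lemma cball_cluster_dist:
  "\<rho> < D \<Longrightarrow> p \<in> cball_pts P (cluster_dist D) c \<rho> \<Longrightarrow> p div 4 = c div 4"
  unfolding cball_pts_def cluster_dist_def by (auto split: if_splits)

lemma cball_cluster_dist_1:
  assumes "1 < D" "j \<in> cluster_points n"
  shows "cball_pts (cluster_points n) (cluster_dist D) j 1 = cluster (j div 4)"
proof -
  have "cluster_dist D j p \<le> 1 \<longleftrightarrow> p div 4 = j div 4" for p
    using assms(1) by (auto simp: cluster_dist_def)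
  moreover have "p \<in> cluster_points n" if "p div 4 = j div 4" for p
    using that assms(2) div_less_iff_less_mult[of 4 p "2 * n"] div_less_iff_less_mult[of 4 j "2 * n"]
    unfolding cluster_points_def by simp
  ultimately show ?thesis
    unfolding cball_pts_def by (auto simp: mem_cluster)
qed

lemma card_covered_le:
  assumes "finite C" "\<rho> < D"
    and "\<And>p c. p \<in> A \<Longrightarrow> c \<in> C \<Longrightarrow> p div 4 = c div 4 \<Longrightarrow> c \<in> A"
  shows "card ((\<Union>c\<in>C. cball_pts P (cluster_dist D) c \<rho>) \<inter> A) \<le> 4 * card (C \<inter> A)"
proof -
  have "(\<Union>c\<in>C. cball_pts P (cluster_dist D) c \<rho>) \<inter> A \<subseteq> (\<Union>c\<in>C \<inter> A. cluster (c div 4))"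
    using assms(3) cball_cluster_dist[OF assms(2)] by (fastforce simp: mem_cluster)
  then have "card ((\<Union>c\<in>C. cball_pts P (cluster_dist D) c \<rho>) \<inter> A) \<le> card (\<Union>c\<in>C \<inter> A. cluster (c div 4))"
    using assms(1) by (intro card_mono) (auto simp: cluster_def)
  also have "\<dots> \<le> (\<Sum>c\<in>C \<inter> A. card (cluster (c div 4)))"
    using assms(1) by (intro card_UN_le) auto
  finally show ?thesis by (simp add: card_cluster)
qed

lemma red_points_cluster_closed: "p \<in> red_points n \<Longrightarrow> p div 4 = c div 4 \<Longrightarrow> c \<in> red_points n"
  using div_less_iff_less_mult[of 4 p n] div_less_iff_less_mult[of 4 c n]
  unfolding red_points_def by (simp add: mult.commute)

lemma colorful_solution_radius_ge:
  assumes "odd n" "colorful_solution (cluster_points n) (cluster_dist D) (red_points n) n (2 * n) (2 * n) \<rho> C"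
  shows "D \<le> \<rho>"
proof (rule ccontr)
  assume "\<not> D \<le> \<rho>"
  then have "\<rho> < D" by simp
  define B where "B = cluster_points n - red_points n"
  define U where "U = (\<Union>c\<in>C. cball_pts (cluster_points n) (cluster_dist D) c \<rho>)"
  have C: "C \<subseteq> cluster_points n" "card C \<le> n"
    using assms(2) unfolding colorful_solution_def by auto
  then have "finite C" using finite_cluster_points finite_subset by blast
  have "2 * n \<le> card (U \<inter> red_points n)" "2 * n \<le> card (U \<inter> B)"
    using assms(2) unfolding colorful_solution_def U_def B_def by auto
  moreover have "card (U \<inter> red_points n) \<le> 4 * card (C \<inter> red_points n)"
    unfolding U_def by (rule card_covered_le[OF \<open>finite C\<close> \<open>\<rho> < D\<close> red_points_cluster_closed])
  moreover have "card (U \<inter> B) \<le> 4 * card (C \<inter> B)"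
    unfolding U_def
  proof (rule card_covered_le[OF \<open>finite C\<close> \<open>\<rho> < D\<close>])
    fix p c assume "p \<in> B" "c \<in> C" "p div 4 = c div 4"
    then show "c \<in> B" using C(1) red_points_cluster_closed[of c n p] unfolding B_def by auto
  qed
  moreover have "card (C \<inter> red_points n) + card (C \<inter> B) = card C"
  proof -
    have "C \<inter> B = C - red_points n" using C(1) unfolding B_def by auto
    then show ?thesis using card_Int_Diff[OF \<open>finite C\<close>, of "red_points n"] by simp
  qed
  ultimately show False
    using C(2) assms(1) by presburger
qed

section \<open>The Sum-of-Squares solution\<close>

text \<open>
  A set X of red clusters opens red cluster c iff c is in X and blue cluster n + c iff c is not;
  the point 4c is the centre of an open cluster c, and all four points of an open cluster are
  covered. This point satisfies LP1 exactly when |X| = n/2.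
\<close>

definition cluster_open :: "nat \<Rightarrow> nat \<Rightarrow> nat set \<Rightarrow> real" where
  "cluster_open n c X = (if c < n then of_bool (c \<in> X) else if c < 2 * n then of_bool (c - n \<notin> X) else 0)"

definition lp_value :: "nat \<Rightarrow> var \<Rightarrow> nat set \<Rightarrow> real" where
  "lp_value n v X = (case v of Inl i \<Rightarrow> if 4 dvd i then cluster_open n (i div 4) X else 0
                             | Inr j \<Rightarrow> cluster_open n (j div 4) X)"

definition lp_monomial :: "nat \<Rightarrow> var set \<Rightarrow> nat set \<Rightarrow> real" where
  "lp_monomial n I X = (\<Prod>v\<in>I. lp_value n v X)"

definition sos_witness :: "nat \<Rightarrow> var set \<Rightarrow> real" where
  "sos_witness n I = pexp {..<n} (real n / 2) (lp_monomial n I)"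

lemma cluster_open_cases:
  obtains "cluster_open n c = (\<lambda>X. 0)"
  | "c < n" "cluster_open n c = (\<lambda>X. of_bool (c \<in> X))"
  | "c - n < n" "cluster_open n c = (\<lambda>X. of_bool (c - n \<notin> X))"
  using that unfolding cluster_open_def by (cases "c < n"; cases "c < 2 * n") (auto simp: fun_eq_iff)

lemma lp_value_cases:
  obtains "lp_value n v = (\<lambda>X. 0)"
  | c where "c < n" "lp_value n v = (\<lambda>X. of_bool (c \<in> X))"
  | c where "c < n" "lp_value n v = (\<lambda>X. of_bool (c \<notin> X))"
proof -
  note cases = that
  have cluster: thesis if "lp_value n v = cluster_open n c" for c
    using cases that by (cases rule: cluster_open_cases[of n c]) auto
  show thesis
  proof (cases v)
    case (Inl i)
    then show thesis
      using cases(1) cluster[of "i div 4"] by (cases "4 dvd i") (auto simp: lp_value_def fun_eq_iff)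
  next
    case (Inr j)
    then show thesis using cluster[of "j div 4"] by (simp add: lp_value_def fun_eq_iff)
  qed
qed

lemma lp_value_idem: "lp_value n v X * lp_value n v X = lp_value n v X"
  by (cases rule: lp_value_cases[of n v]) auto

lemma lp_monomial_empty [simp]: "lp_monomial n {} X = 1"
  by (simp add: lp_monomial_def)

lemma lp_monomial_insert: "finite I \<Longrightarrow> lp_monomial n (insert v I) X = lp_value n v X * lp_monomial n I X"
  unfolding lp_monomial_def
  by (cases "v \<in> I") (simp_all add: insert_absorb prod.remove mult.assoc[symmetric] lp_value_idem)

lemma lp_monomial_union:
  "finite I \<Longrightarrow> finite J \<Longrightarrow> lp_monomial n (I \<union> J) X = lp_monomial n I X * lp_monomial n J X"
  by (induction I rule: finite_induct) (simp_all add: lp_monomial_insert mult.assoc)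

lemma low_degree_lp_monomial: "finite I \<Longrightarrow> low_degree {..<n} (card I) (lp_monomial n I)"
proof (induction I rule: finite_induct)
  case empty
  then show ?case using low_degree_const[of "{..<n}" 0 1] by (simp add: lp_monomial_def)
next
  case (insert v I)
  have "low_degree {..<n} 1 (lp_value n v)"
  proof (cases rule: lp_value_cases[of n v])
    case 1
    then show ?thesis using low_degree_const[of "{..<n}" 1 0] by simp
  next
    case (2 c)
    show ?thesis
      by (rule low_degree.cong[OF low_degree.monomial[of "{c}"]]) (use 2 in \<open>auto simp: monomial_def\<close>)
  next
    case (3 c)
    then have "lp_value n v = (\<lambda>X. 1 - monomial {c} X)" by (simp add: monomial_def fun_eq_iff)
    then show ?thesis using 3 by (simp add: low_degree_diff low_degree_const low_degree.monomial)
  qed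
  then have "low_degree {..<n} (1 + card I) (\<lambda>X. lp_value n v X * lp_monomial n I X)"
    using insert.IH by (rule low_degree_mult)
  then show ?case using insert by (simp add: lp_monomial_insert)
qed

lemma lp_monomial_face_indicator:
  assumes "finite I"
  obtains "lp_monomial n I = (\<lambda>X. 0)"
  | A B where "A \<subseteq> {..<n}" "B \<subseteq> {..<n}" "card A \<le> card I" "card B \<le> card I"
      "lp_monomial n I = face_indicator A B"
  using assms
proof (induction I arbitrary: thesis rule: finite_induct)
  case empty
  then show ?case using empty.prems(2)[of "{}" "{}"] by (simp add: face_indicator_def fun_eq_iff)
next
  case (insert v I)
  have prod: "lp_monomial n (insert v I) = (\<lambda>X. lp_value n v X * lp_monomial n I X)"
    using insert(1) by (simp add: lp_monomial_insert fun_eq_iff)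
  show ?case
  proof (rule insert.IH)
    assume "lp_monomial n I = (\<lambda>X. 0)"
    then show thesis using insert.prems(1) prod by simp
  next
    fix A B assume AB: "A \<subseteq> {..<n}" "B \<subseteq> {..<n}" "card A \<le> card I" "card B \<le> card I"
      "lp_monomial n I = face_indicator A B"
    have finite: "finite A" "finite B" using AB(1,2) finite_subset by blast+
    have card: "card (insert v I) = Suc (card I)" using insert(1,2) by simp
    show thesis
    proof (cases rule: lp_value_cases[of n v])
      case 1
      then show thesis using insert.prems(1) prod by simp
    next
      case (2 c)
      then show thesis
        using insert.prems(2)[of "insert c A" B] AB finite card
        by (auto simp: prod card_insert_if face_indicator_def fun_eq_iff)
    next
      case (3 c)
      then show thesis
        using insert.prems(2)[of A "insert c B"] AB finite card
        by (auto simp: prod card_insert_if face_indicator_def fun_eq_iff)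
    qed
  qed
qed

lemma sos_witness_bounds:
  assumes "finite I" "2 * card I \<le> n"
  shows "sos_witness n I \<in> {0..1}"
proof (cases rule: lp_monomial_face_indicator[OF assms(1), of n])
  case 1
  then show ?thesis by (simp add: sos_witness_def)
next
  case (2 A B)
  show ?thesis
  proof (cases "A \<inter> B = {}")
    case True
    then show ?thesis
      unfolding sos_witness_def 2(5) using 2 assms(2)
      by (intro pexp_face_indicator_bounds) auto
  next
    case False
    then have "lp_monomial n I = (\<lambda>X. 0)" by (auto simp: 2(5) face_indicator_def fun_eq_iff)
    then show ?thesis by (simp add: sos_witness_def)
  qed
qed

lemma sum_cluster_first:
  assumes "\<And>j. j \<in> cluster c \<Longrightarrow> g j = (if j = c * 4 then a else b)"
  shows "(\<Sum>j\<in>cluster c. g j) = a + 3 * (b :: real)"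
proof -
  have "cluster c = {c * 4, c * 4 + 1, c * 4 + 2, c * 4 + 3}" by (auto simp: cluster_def)
  then show ?thesis using assms by simp
qed

lemma sum_lessThan_div_4: "(\<Sum>j<m * 4. f (j div 4)) = 4 * (\<Sum>c<m. f c :: real)" for m :: nat
proof -
  have "(\<Sum>j\<in>cluster c. f (j div 4)) = f c + 3 * f c" for c
    by (intro sum_cluster_first) (simp add: mem_cluster)
  then show ?thesis
    unfolding sum.nat_group[symmetric] cluster_def[symmetric] by (simp add: sum_distrib_left)
qed

lemma sum_lp_value_center: "(\<Sum>i\<in>cluster c. lp_value n (Inl i) X) = cluster_open n c X"
proof (rule trans[OF sum_cluster_first[of c _ "cluster_open n c X" 0]])
  fix i assume "i \<in> cluster c"
  then have "4 dvd i \<longleftrightarrow> i = c * 4" "i div 4 = c" by (auto simp: cluster_def)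
  then show "lp_value n (Inl i) X = (if i = c * 4 then cluster_open n c X else 0)"
    by (simp add: lp_value_def)
qed simp

lemma sum_lp_value_centers:
  "(\<Sum>i<m * 4. lp_value n (Inl i) X) = (\<Sum>c<m. cluster_open n c X)"
  unfolding sum.nat_group[symmetric] cluster_def[symmetric] sum_lp_value_center ..

lemma sum_lp_value_covered:
  "(\<Sum>j<m * 4. lp_value n (Inr j) X) = 4 * (\<Sum>c<m. cluster_open n c X)"
  using sum_lessThan_div_4[of "\<lambda>c. cluster_open n c X" m] by (simp add: lp_value_def)

lemma sum_cluster_open_red: "X \<subseteq> {..<n} \<Longrightarrow> (\<Sum>c<n. cluster_open n c X) = real (card X)"
  by (simp add: cluster_open_def of_bool_def sum.If_cases Int_absorb1)

lemma sum_cluster_open: "X \<subseteq> {..<n} \<Longrightarrow> (\<Sum>c<2 * n. cluster_open n c X) = real n"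
proof -
  assume X: "X \<subseteq> {..<n}"
  have "(\<Sum>c\<in>{n..<2 * n}. cluster_open n c X) = (\<Sum>c<n. 1 - cluster_open n c X)"
    by (rule sum.reindex_bij_witness[where i = "\<lambda>c. c + n" and j = "\<lambda>c. c - n"])
      (auto simp: cluster_open_def)
  moreover have "(\<Sum>c<2 * n. cluster_open n c X)
      = (\<Sum>c<n. cluster_open n c X) + (\<Sum>c\<in>{n..<2 * n}. cluster_open n c X)"
    by (subst sum.union_disjoint[symmetric]) (auto intro: sum.cong)
  ultimately show ?thesis
    using X by (simp add: sum_subtractf sum_cluster_open_red)
qed

definition lp_eval :: "var set \<Rightarrow> linform \<Rightarrow> (var \<Rightarrow> real) \<Rightarrow> real" where
  "lp_eval V g a = fst g + (\<Sum>w\<in>V. snd g w * a w)"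

lemma lp_eval_lp_vars:
  assumes "finite P"
  shows "lp_eval (lp_vars P) g a = fst g + (\<Sum>i\<in>P. snd g (Inl i) * a (Inl i)) + (\<Sum>j\<in>P. snd g (Inr j) * a (Inr j))"
  unfolding lp_eval_def lp_vars_def using assms by (subst sum.union_disjoint) (auto simp: sum.reindex)

lemma sum_lp_value_cball:
  assumes "1 < D" "j \<in> cluster_points n"
  shows "(\<Sum>i\<in>cluster_points n. of_bool (i \<in> cball_pts (cluster_points n) (cluster_dist D) j 1) * lp_value n (Inl i) X)
       = cluster_open n (j div 4) X"
proof -
  define B where "B = cluster (j div 4)"
  have B: "cball_pts (cluster_points n) (cluster_dist D) j 1 = B" "cluster_points n \<inter> B = B"
    using cball_cluster_dist_1[OF assms] unfolding B_def cball_pts_def by auto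
  have "(\<Sum>i\<in>cluster_points n. of_bool (i \<in> B) * lp_value n (Inl i) X)
      = (\<Sum>i\<in>cluster_points n. if i \<in> B then lp_value n (Inl i) X else 0)"
    by (rule sum.cong) simp_all
  also have "\<dots> = (\<Sum>i\<in>B. lp_value n (Inl i) X)"
    using sum.inter_restrict[OF finite_cluster_points[of n], where g = "\<lambda>i. lp_value n (Inl i) X" and B = B] B(2) by simp
  finally show ?thesis unfolding B(1) unfolding B_def sum_lp_value_center .
qed

lemma sum_lp_value_covered_subset:
  assumes "S \<subseteq> cluster_points n"
  shows "(\<Sum>j\<in>cluster_points n. of_bool (j \<in> S) * lp_value n (Inr j) X) = (\<Sum>j\<in>S. lp_value n (Inr j) X)"
proof -
  have "(\<Sum>j\<in>cluster_points n. of_bool (j \<in> S) * lp_value n (Inr j) X)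
      = (\<Sum>j\<in>cluster_points n. if j \<in> S then lp_value n (Inr j) X else 0)"
    by (rule sum.cong) simp_all
  also have "\<dots> = (\<Sum>j\<in>S. lp_value n (Inr j) X)"
    using sum.inter_restrict[OF finite_cluster_points[of n], where g = "\<lambda>j. lp_value n (Inr j) X" and B = S] assms
    by (simp add: Int_absorb1)
  finally show ?thesis .
qed

lemma sum_lp_value_red:
  "X \<subseteq> {..<n} \<Longrightarrow> (\<Sum>j\<in>red_points n. lp_value n (Inr j) X) = 4 * real (card X)"
  unfolding red_points_def mult.commute[of 4 n] sum_lp_value_covered by (simp add: sum_cluster_open_red)

lemma sum_lp_value_blue:
  assumes "X \<subseteq> {..<n}"
  shows "(\<Sum>j\<in>cluster_points n - red_points n. lp_value n (Inr j) X) = 4 * real n - 4 * real (card X)"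
proof -
  have "(\<Sum>j\<in>cluster_points n - red_points n. lp_value n (Inr j) X)
      = (\<Sum>j<2 * n * 4. lp_value n (Inr j) X) - (\<Sum>j\<in>red_points n. lp_value n (Inr j) X)"
    unfolding cluster_points_eq red_points_def by (subst sum_diff) auto
  also have "\<dots> = 4 * real n - 4 * real (card X)"
    unfolding sum_lp_value_covered sum_lp_value_red[OF assms] sum_cluster_open[OF assms] ..
  finally show ?thesis .
qed

lemma lp1_constraint_eval:
  assumes "1 < D" "g \<in> lp1_constraints (cluster_points n) (cluster_dist D) (red_points n) n (2 * n) (2 * n)"
  obtains \<kappa> where "\<And>X. X \<subseteq> {..<n} \<Longrightarrow>
    lp_eval (lp_vars (cluster_points n)) g (\<lambda>w. lp_value n w X) = \<kappa> * (real (card X) - real n / 2)"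
proof -
  let ?P = "cluster_points n" and ?R = "red_points n"
  note eval = lp_eval_lp_vars[OF finite_cluster_points]
  from assms(2) consider
      (ball) j where "j \<in> ?P" "g = (0, \<lambda>v. case v of Inl i \<Rightarrow> of_bool (i \<in> cball_pts ?P (cluster_dist D) j 1)
                                     | Inr j' \<Rightarrow> (if j' = j then -1 else 0))"
    | (centers) "g = (real n, \<lambda>v. case v of Inl i \<Rightarrow> (if i \<in> ?P then -1 else 0) | Inr _ \<Rightarrow> 0)"
    | (red) "g = (- real (2 * n), \<lambda>v. case v of Inl _ \<Rightarrow> 0 | Inr j \<Rightarrow> of_bool (j \<in> ?R))"
    | (blue) "g = (- real (2 * n), \<lambda>v. case v of Inl _ \<Rightarrow> 0 | Inr j \<Rightarrow> of_bool (j \<in> ?P - ?R))"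
    unfolding lp1_constraints_def of_bool_def by blast
  then show thesis
  proof cases
    case (ball j)
    have "(\<Sum>j'\<in>?P. snd g (Inr j') * lp_value n (Inr j') X) = - cluster_open n (j div 4) X" for X
    proof -
      have "(\<Sum>j'\<in>?P. snd g (Inr j') * lp_value n (Inr j') X)
          = (\<Sum>j'\<in>?P. if j' = j then - cluster_open n (j div 4) X else 0)"
        by (rule sum.cong) (simp_all add: ball(2) lp_value_def)
      then show ?thesis using ball(1) by (simp add: sum.delta[OF finite_cluster_points])
    qed
    then show thesis
      using that[of 0] by (simp add: eval ball(2) sum_lp_value_cball[OF assms(1) ball(1)])
  next
    case centers
    have "(\<Sum>i\<in>?P. lp_value n (Inl i) X) = (\<Sum>c<2 * n. cluster_open n c X)" for X
      unfolding cluster_points_eq by (rule sum_lp_value_centers)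
    then show thesis
      using that[of 0] by (simp add: eval centers sum_negf sum_cluster_open)
  next
    case red
    have "lp_eval (lp_vars ?P) g (\<lambda>w. lp_value n w X) = 4 * (real (card X) - real n / 2)"
      if "X \<subseteq> {..<n}" for X
      using sum_lp_value_covered_subset[OF red_points_subset, of n X]
      by (simp add: eval red sum_lp_value_red[OF that] algebra_simps)
    then show thesis by (rule that)
  next
    case blue
    have "lp_eval (lp_vars ?P) g (\<lambda>w. lp_value n w X) = -4 * (real (card X) - real n / 2)"
      if "X \<subseteq> {..<n}" for X
      using sum_lp_value_covered_subset[of "?P - ?R" n X]
      by (simp add: eval blue sum_lp_value_blue[OF that] algebra_simps)
    then show thesis by (rule that)
  qed
qed

lemma quadratic_form_lp_monomial:
  assumes "finite T" "\<And>I. I \<in> T \<Longrightarrow> finite I"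
  shows "(\<Sum>I\<in>T. \<Sum>J\<in>T. v I * pexp V K (\<lambda>X. lp_monomial n (I \<union> J) X * h X) * v J)
       = pexp V K (\<lambda>X. (\<Sum>I\<in>T. v I * lp_monomial n I X)\<^sup>2 * h X)"
proof -
  have "(\<Sum>I\<in>T. v I * lp_monomial n I X)\<^sup>2 * h X
      = (\<Sum>I\<in>T. \<Sum>J\<in>T. (v I * lp_monomial n I X) * (v J * lp_monomial n J X) * h X)" for X
    unfolding power2_eq_square sum_product by (simp only: sum_distrib_right)
  also have "\<dots> X = (\<Sum>I\<in>T. \<Sum>J\<in>T. v I * v J * (lp_monomial n (I \<union> J) X * h X))" for X
    by (intro sum.cong refl) (simp add: lp_monomial_union assms(2) algebra_simps)
  finally have "(\<Sum>I\<in>T. v I * lp_monomial n I X)\<^sup>2 * h X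
      = (\<Sum>I\<in>T. \<Sum>J\<in>T. v I * v J * (lp_monomial n (I \<union> J) X * h X))" for X .
  then have "pexp V K (\<lambda>X. (\<Sum>I\<in>T. v I * lp_monomial n I X)\<^sup>2 * h X)
      = (\<Sum>I\<in>T. \<Sum>J\<in>T. v I * v J * pexp V K (\<lambda>X. lp_monomial n (I \<union> J) X * h X))"
    by (simp only: pexp_sum pexp_cmult)
  then show ?thesis
    by (simp add: ac_simps)
qed

lemma lin_star_sos_witness:
  assumes "finite V" "finite L"
  shows "lin_star V g (sos_witness n) L
       = pexp {..<n} (real n / 2) (\<lambda>X. lp_monomial n L X * lp_eval V g (\<lambda>w. lp_value n w X))"
proof -
  have "lp_monomial n L X * lp_eval V g (\<lambda>w. lp_value n w X)
      = fst g * lp_monomial n L X + (\<Sum>w\<in>V. snd g w * lp_monomial n (insert w L) X)" for X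
    using assms(2) by (simp add: lp_eval_def lp_monomial_insert sum_distrib_left algebra_simps)
  then show ?thesis
    by (simp add: lin_star_def sos_witness_def pexp_add pexp_cmult pexp_sum)
qed

lemma low_degree_lp_combination:
  assumes "finite T" "\<And>I. I \<in> T \<Longrightarrow> finite I \<and> card I \<le> t"
  shows "low_degree {..<n} t (\<lambda>X. \<Sum>I\<in>T. v I * lp_monomial n I X)"
  using assms by (intro low_degree_sum low_degree.cmult low_degree_mono[OF low_degree_lp_monomial]) auto

lemma subsets_upto_finite:
  "finite V \<Longrightarrow> finite (subsets_upto V t)" "finite V \<Longrightarrow> I \<in> subsets_upto V t \<Longrightarrow> finite I \<and> card I \<le> t"
  unfolding subsets_upto_def by (auto intro: finite_subset)

lemma psd_moment_sos_witness:
  assumes "finite V" "2 * t \<le> n"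
  shows "psd_on (subsets_upto V t) (\<lambda>I J. sos_witness n (I \<union> J))"
  unfolding psd_on_def
proof (intro conjI ballI allI)
  fix v :: "var set \<Rightarrow> real"
  let ?T = "subsets_upto V t"
  have "0 \<le> pexp {..<n} (real n / 2) (\<lambda>X. (\<Sum>I\<in>?T. v I * lp_monomial n I X)\<^sup>2)"
    using assms subsets_upto_finite[OF assms(1)]
    by (intro pexp_square_nonneg low_degree_lp_combination) auto
  also have "\<dots> = (\<Sum>I\<in>?T. \<Sum>J\<in>?T. v I * sos_witness n (I \<union> J) * v J)"
    using quadratic_form_lp_monomial[of ?T v "{..<n}" "real n / 2" n "\<lambda>_. 1"] subsets_upto_finite[OF assms(1)]
    by (simp add: sos_witness_def)
  finally show "0 \<le> (\<Sum>I\<in>?T. \<Sum>J\<in>?T. v I * sos_witness n (I \<union> J) * v J)" .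
qed (simp add: Un_commute)

lemma psd_localizing_sos_witness:
  assumes "finite V" "2 * s < n"
    and "\<And>X. X \<subseteq> {..<n} \<Longrightarrow> lp_eval V g (\<lambda>w. lp_value n w X) = \<kappa> * (real (card X) - real n / 2)"
  shows "psd_on (subsets_upto V s) (\<lambda>I J. lin_star V g (sos_witness n) (I \<union> J))"
  unfolding psd_on_def
proof (intro conjI ballI allI)
  fix v :: "var set \<Rightarrow> real"
  let ?T = "subsets_upto V s"
  define F where "F = (\<lambda>X. \<Sum>I\<in>?T. v I * lp_monomial n I X)"
  have F: "low_degree {..<n} (s + s) (\<lambda>X. F X * F X)"
    unfolding F_def using subsets_upto_finite[OF assms(1)]
    by (intro low_degree_mult low_degree_lp_combination) auto
  have "(\<Sum>I\<in>?T. \<Sum>J\<in>?T. v I * lin_star V g (sos_witness n) (I \<union> J) * v J)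
      = pexp {..<n} (real n / 2) (\<lambda>X. (F X)\<^sup>2 * lp_eval V g (\<lambda>w. lp_value n w X))"
    unfolding F_def using subsets_upto_finite[OF assms(1)]
    by (simp add: lin_star_sos_witness[OF assms(1)] quadratic_form_lp_monomial)
  also have "\<dots> = \<kappa> * pexp {..<n} (real n / 2) (\<lambda>X. (real (card X) - real n / 2) * (F X * F X))"
    unfolding pexp_cmult[symmetric] by (rule pexp_cong) (simp add: assms(3) power2_eq_square)
  also have "\<dots> = 0"
    using pexp_card_constraint[OF _ F] assms(2) by simp
  finally show "0 \<le> (\<Sum>I\<in>?T. \<Sum>J\<in>?T. v I * lin_star V g (sos_witness n) (I \<union> J) * v J)" by simp
qed (simp add: Un_commute)

lemma sos_witness_in_lift:
  assumes "1 < D" "0 < n" "4 * t \<le> n"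
  shows "in_sos_lift (lp_vars (cluster_points n))
           (lp1_constraints (cluster_points n) (cluster_dist D) (red_points n) n (2 * n) (2 * n)) t (sos_witness n)"
proof -
  have V: "finite (lp_vars (cluster_points n))" by (simp add: lp_vars_def cluster_points_def)
  have "lp_monomial n {} = (\<lambda>X. 1)" by (simp add: fun_eq_iff)
  then have "sos_witness n {} = 1"
    by (simp add: sos_witness_def pexp_const)
  moreover have "sos_witness n I \<in> {0..1}" if "I \<in> subsets_upto (lp_vars (cluster_points n)) (2 * t)" for I
    using subsets_upto_finite(2)[OF V that] assms(3) by (intro sos_witness_bounds) auto
  moreover have "psd_on (subsets_upto (lp_vars (cluster_points n)) t) (\<lambda>I J. sos_witness n (I \<union> J))"
    using V assms(3) by (intro psd_moment_sos_witness) auto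
  moreover have "psd_on (subsets_upto (lp_vars (cluster_points n)) (t - 1))
      (\<lambda>I J. lin_star (lp_vars (cluster_points n)) g (sos_witness n) (I \<union> J))"
    if g: "g \<in> lp1_constraints (cluster_points n) (cluster_dist D) (red_points n) n (2 * n) (2 * n)" for g
  proof -
    obtain \<kappa> where "\<And>X. X \<subseteq> {..<n} \<Longrightarrow>
        lp_eval (lp_vars (cluster_points n)) g (\<lambda>w. lp_value n w X) = \<kappa> * (real (card X) - real n / 2)"
      using lp1_constraint_eval[OF assms(1) g] by blast
    moreover have "2 * (t - 1) < n" using assms(2,3) by linarith
    ultimately show ?thesis using psd_localizing_sos_witness[OF V] by blast
  qed
  ultimately show ?thesis
    unfolding in_sos_lift_def by auto
qed

theorem theorem5:
  shows "\<exists>c::real > 0. \<forall>(n::nat) (D::real). odd n \<and> 0 < n \<and> 1 < D \<longrightarrow>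
    (\<exists>(P::nat set) (d::nat \<Rightarrow> nat \<Rightarrow> real) (R::nat set).
       finite P \<and> card P = 8 * n \<and> metric_on P d \<and> R \<subseteq> P \<and>
       (\<forall>\<rho> C. colorful_solution P d R n (2 * n) (2 * n) \<rho> C \<longrightarrow> D \<le> \<rho>) \<and>
       (\<forall>t::nat. 1 \<le> t \<and> real t \<le> c * real n \<longrightarrow>
          (\<exists>y. in_sos_lift (lp_vars P) (lp1_constraints P d R n (2 * n) (2 * n)) t y)))"
proof (intro exI[of _ "1 / 4 :: real"] conjI allI impI)
  fix n :: nat and D :: real
  assume n: "odd n \<and> 0 < n \<and> 1 < D"
  let ?P = "cluster_points n" and ?d = "cluster_dist D" and ?R = "red_points n"
  have "metric_on ?P ?d"
    using n by (intro metric_on_cluster_dist) simp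
  moreover have "\<forall>\<rho> C. colorful_solution ?P ?d ?R n (2 * n) (2 * n) \<rho> C \<longrightarrow> D \<le> \<rho>"
    using n by (blast intro: colorful_solution_radius_ge)
  moreover have "\<forall>t. 1 \<le> t \<and> real t \<le> 1 / 4 * real n \<longrightarrow>
      (\<exists>y. in_sos_lift (lp_vars ?P) (lp1_constraints ?P ?d ?R n (2 * n) (2 * n)) t y)"
  proof (intro allI impI)
    fix t :: nat assume "1 \<le> t \<and> real t \<le> 1 / 4 * real n"
    then have "4 * t \<le> n" by linarith
    with n show "\<exists>y. in_sos_lift (lp_vars ?P) (lp1_constraints ?P ?d ?R n (2 * n) (2 * n)) t y"
      using sos_witness_in_lift by blast
  qed
  moreover have "card ?P = 8 * n" by (simp add: cluster_points_def)
  ultimately show "\<exists>P d R. finite P \<and> card P = 8 * n \<and> metric_on P d \<and> R \<subseteq> P \<and>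
       (\<forall>\<rho> C. colorful_solution P d R n (2 * n) (2 * n) \<rho> C \<longrightarrow> D \<le> \<rho>) \<and>
       (\<forall>t. 1 \<le> t \<and> real t \<le> 1 / 4 * real n \<longrightarrow>
          (\<exists>y. in_sos_lift (lp_vars P) (lp1_constraints P d R n (2 * n) (2 * n)) t y))"
    by (intro exI[of _ ?P] exI[of _ ?d] exI[of _ ?R]) (simp add: finite_cluster_points red_points_subset)
qed simp

end
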